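(* Let $F$ be an algebraically closed field of characteristic zero. Let $A$ be a finite dimensional full algebra and $B_1,\dots,B_t$ a finite family of finite dimensional full algebras, none of which covers $A$ (i.e. $p_{B_i}$ does not cover $p_A$ for each $i$). If $f_0$ is a weakly full polynomial of $A$, then there is a strongly full polynomial $f_A\in\langle f_0\rangle_T$ of $A$ that vanishes on $B_i$ for $i=1,\dots,t$. In particular, if $B$ is a direct sum of full algebras, each not covering $A$, then there exists a strongly full polynomial $f_A\in\langle f_0\rangle_T$ of $A$ which vanishes on $B$.
   Context: For a finite dimensional algebra $A$ with Wedderburn–Malcev decomposition $A\cong A_1\times\cdots\times A_q\oplus J_A$ ($A_i$ simple, $J_A$ the Jacobson radical), $A$ is full if, up to permuting the $A_i$, $A_1J_AA_2\cdots J_AA_q\neq0$. $p_A=(\dim A_1,\dots,\dim A_q)$ as an unordered tuple (zeros ignored). A tuple $(b_1,\dots,b_s)$ covers $(a_1,\dots,a_r)$ if the latter (padded with zeros) can be partitioned into $s$ disjoint possibly empty sub-tuples $T_1,\dots,T_s$ with $\sum_{a\in T_i}a\le b_i$. Fix a basis of $A$ consisting of elementary matrices $e^i_{k,l}$ of each $A_i\cong M_{n_i}(F)$ and a basis of $J_A$; an evaluation of a multilinear polynomial is admissible if all values lie in this basis. A multilinear polynomial is weakly full of $A$ if it has a nonzero admissible evaluation in which elements from every simple component occur; it is strongly full of $A$ if it is a nonidentity of $A$ and every basis element of $A_{ss}$ occurs as a value in every nonzero admissible evaluation. $\langle f_0\rangle_T$ is the $T$-ideal generated by $f_0$. *)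

theory Defs
  imports "HOL-Computational_Algebra.Polynomial"
begin

definition alg_closed :: "'f::field itself \<Rightarrow> bool" where
  "alg_closed _ \<longleftrightarrow> (\<forall>p::'f poly. 0 < degree p \<longrightarrow> (\<exists>x. poly p x = 0))"

text \<open>An algebra of dimension adim A over 'f: elements are coordinate vectors
  (functions nat => 'f vanishing from index adim A on), product given by
  the structure constants sc A i j k.  Not necessarily unital.\<close>

record 'f alg =
  adim :: nat
  sc :: "nat \<Rightarrow> nat \<Rightarrow> nat \<Rightarrow> 'f"

type_synonym 'f vec = "nat \<Rightarrow> 'f"

definition acarrier :: "('f::field) alg \<Rightarrow> 'f vec set" where
  "acarrier A = {x. \<forall>k. adim A \<le> k \<longrightarrow> x k = 0}"

definition azero :: "('f::field) vec" where
  "azero = (\<lambda>_. 0)"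

definition aadd :: "('f::field) vec \<Rightarrow> 'f vec \<Rightarrow> 'f vec" where
  "aadd x y = (\<lambda>k. x k + y k)"

definition ascale :: "'f::field \<Rightarrow> 'f vec \<Rightarrow> 'f vec" where
  "ascale c x = (\<lambda>k. c * x k)"

definition amul :: "('f::field) alg \<Rightarrow> 'f vec \<Rightarrow> 'f vec \<Rightarrow> 'f vec" where
  "amul A x y = (\<lambda>k. if k < adim A
      then (\<Sum>i<adim A. \<Sum>j<adim A. x i * y j * sc A i j k) else 0)"

definition is_alg :: "('f::field) alg \<Rightarrow> bool" where
  "is_alg A \<longleftrightarrow> (\<forall>x\<in>acarrier A. \<forall>y\<in>acarrier A. \<forall>z\<in>acarrier A.
      amul A (amul A x y) z = amul A x (amul A y z))"

fun aprod :: "('f::field) alg \<Rightarrow> 'f vec list \<Rightarrow> 'f vec" where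
  "aprod A [] = azero"
| "aprod A [x] = x"
| "aprod A (x # y # ys) = amul A x (aprod A (y # ys))"

definition alg_dsum2 :: "('f::field) alg \<Rightarrow> 'f alg \<Rightarrow> 'f alg" where
  "alg_dsum2 A B = \<lparr> adim = adim A + adim B,
     sc = (\<lambda>i j k. if i < adim A \<and> j < adim A \<and> k < adim A then sc A i j k
        else if adim A \<le> i \<and> adim A \<le> j \<and> adim A \<le> k
        then sc B (i - adim A) (j - adim A) (k - adim A) else 0) \<rparr>"

fun alg_dsum :: "('f::field) alg list \<Rightarrow> 'f alg" where
  "alg_dsum [] = \<lparr> adim = 0, sc = (\<lambda>_ _ _. 0) \<rparr>"
| "alg_dsum (B # Bs) = alg_dsum2 B (alg_dsum Bs)"

definition is_ideal :: "('f::field) alg \<Rightarrow> 'f vec set \<Rightarrow> bool" where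
  "is_ideal A I \<longleftrightarrow> I \<subseteq> acarrier A \<and> azero \<in> I \<and>
     (\<forall>x\<in>I. \<forall>y\<in>I. aadd x y \<in> I) \<and> (\<forall>c. \<forall>x\<in>I. ascale c x \<in> I) \<and>
     (\<forall>a\<in>acarrier A. \<forall>x\<in>I. amul A a x \<in> I \<and> amul A x a \<in> I)"

definition nilpotent_set :: "('f::field) alg \<Rightarrow> 'f vec set \<Rightarrow> bool" where
  "nilpotent_set A I \<longleftrightarrow> (\<exists>N>0. \<forall>xs. length xs = N \<longrightarrow> set xs \<subseteq> I \<longrightarrow> aprod A xs = azero)"

text \<open>For a finite dimensional algebra the Jacobson radical is the largest
  nilpotent ideal, i.e. the union (= sum) of all nilpotent ideals.\<close>
definition jac_rad :: "('f::field) alg \<Rightarrow> 'f vec set" where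
  "jac_rad A = \<Union>{I. is_ideal A I \<and> nilpotent_set A I}"

text \<open>Data: q simple components, the i-th isomorphic to M_(n i)(F) with matrix
  units e i k l (k,l < n i); a basis js 0 .. js (d-1) of the radical.\<close>

definition ss_comb :: "nat \<Rightarrow> (nat \<Rightarrow> nat) \<Rightarrow> (nat \<Rightarrow> nat \<Rightarrow> nat \<Rightarrow> ('f::field) vec)
    \<Rightarrow> (nat \<Rightarrow> nat \<Rightarrow> nat \<Rightarrow> 'f) \<Rightarrow> 'f vec" where
  "ss_comb q n e a = (\<lambda>t. \<Sum>i<q. \<Sum>k<n i. \<Sum>l<n i. a i k l * e i k l t)"

definition rad_comb :: "nat \<Rightarrow> (nat \<Rightarrow> ('f::field) vec) \<Rightarrow> (nat \<Rightarrow> 'f) \<Rightarrow> 'f vec" where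
  "rad_comb d js b = (\<lambda>t. \<Sum>m<d. b m * js m t)"

definition is_WM :: "('f::field) alg \<Rightarrow> nat \<Rightarrow> (nat \<Rightarrow> nat) \<Rightarrow> (nat \<Rightarrow> nat \<Rightarrow> nat \<Rightarrow> 'f vec)
    \<Rightarrow> nat \<Rightarrow> (nat \<Rightarrow> 'f vec) \<Rightarrow> bool" where
  "is_WM A q n e d js \<longleftrightarrow>
     (\<forall>i<q. 0 < n i) \<and>
     (\<forall>i<q. \<forall>k<n i. \<forall>l<n i. e i k l \<in> acarrier A) \<and>
     (\<forall>m<d. js m \<in> acarrier A) \<and>
     (\<forall>i<q. \<forall>k<n i. \<forall>l<n i. \<forall>i'<q. \<forall>k'<n i'. \<forall>l'<n i'.
        amul A (e i k l) (e i' k' l') = (if i = i' \<and> l = k' then e i k l' else azero)) \<and>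
     (\<forall>a b. aadd (ss_comb q n e a) (rad_comb d js b) = azero \<longrightarrow>
        (\<forall>i<q. \<forall>k<n i. \<forall>l<n i. a i k l = 0) \<and> (\<forall>m<d. b m = 0)) \<and>
     (\<forall>x\<in>acarrier A. \<exists>a b. x = aadd (ss_comb q n e a) (rad_comb d js b)) \<and>
     range (rad_comb d js) = jac_rad A"

definition simple_comp :: "(nat \<Rightarrow> nat) \<Rightarrow> (nat \<Rightarrow> nat \<Rightarrow> nat \<Rightarrow> ('f::field) vec) \<Rightarrow> nat \<Rightarrow> 'f vec set" where
  "simple_comp n e i = {(\<lambda>t. \<Sum>k<n i. \<Sum>l<n i. c k l * e i k l t) | c. True}"

definition full_word :: "nat \<Rightarrow> (nat \<Rightarrow> 'a) \<Rightarrow> (nat \<Rightarrow> 'a) \<Rightarrow> 'a list" where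
  "full_word q a j = a 0 # concat (map (\<lambda>i. [j i, a (Suc i)]) [0..<q - 1])"

definition is_full :: "('f::field) alg \<Rightarrow> nat \<Rightarrow> (nat \<Rightarrow> nat) \<Rightarrow> (nat \<Rightarrow> nat \<Rightarrow> nat \<Rightarrow> 'f vec)
    \<Rightarrow> nat \<Rightarrow> (nat \<Rightarrow> 'f vec) \<Rightarrow> bool" where
  "is_full A q n e d js \<longleftrightarrow> 0 < q \<and>
     (\<exists>\<sigma>. bij_betw \<sigma> {..<q} {..<q} \<and>
       (\<exists>a j. (\<forall>i<q. a i \<in> simple_comp n e (\<sigma> i)) \<and>
              (\<forall>i. Suc i < q \<longrightarrow> j i \<in> range (rad_comb d js)) \<and>
              aprod A (full_word q a j) \<noteq> azero))"

text \<open>p_A: the tuple of dimensions dim M_(n i)(F) = (n i)^2.\<close>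
definition pdims :: "nat \<Rightarrow> (nat \<Rightarrow> nat) \<Rightarrow> nat list" where
  "pdims q n = map (\<lambda>i. n i ^ 2) [0..<q]"

definition covers :: "nat list \<Rightarrow> nat list \<Rightarrow> bool" where
  "covers bs as \<longleftrightarrow> (\<exists>g. (\<forall>i<length as. g i < length bs) \<and>
     (\<forall>j<length bs. (\<Sum>i | i < length as \<and> g i = j. as ! i) \<le> bs ! j))"

section \<open>Noncommutative polynomials (free associative algebra without 1)\<close>

type_synonym 'f ncpoly = "nat list \<Rightarrow> 'f"

definition is_ncpoly :: "('f::field) ncpoly \<Rightarrow> bool" where
  "is_ncpoly p \<longleftrightarrow> finite {w. p w \<noteq> 0} \<and> p [] = 0"

definition padd :: "('f::field) ncpoly \<Rightarrow> 'f ncpoly \<Rightarrow> 'f ncpoly" where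
  "padd p q = (\<lambda>w. p w + q w)"

definition psmult :: "'f::field \<Rightarrow> 'f ncpoly \<Rightarrow> 'f ncpoly" where
  "psmult c p = (\<lambda>w. c * p w)"

definition pmul :: "('f::field) ncpoly \<Rightarrow> 'f ncpoly \<Rightarrow> 'f ncpoly" where
  "pmul p q = (\<lambda>w. \<Sum>i\<le>length w. p (take i w) * q (drop i w))"

fun wsubst :: "(nat \<Rightarrow> ('f::field) ncpoly) \<Rightarrow> nat list \<Rightarrow> 'f ncpoly" where
  "wsubst s [] = (\<lambda>_. 0)"
| "wsubst s [x] = s x"
| "wsubst s (x # y # ys) = pmul (s x) (wsubst s (y # ys))"

definition psubst :: "(nat \<Rightarrow> ('f::field) ncpoly) \<Rightarrow> 'f ncpoly \<Rightarrow> 'f ncpoly" where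
  "psubst s p = (\<lambda>v. \<Sum>w\<in>{w. p w \<noteq> 0}. p w * wsubst s w v)"

inductive_set Tideal :: "('f::field) ncpoly \<Rightarrow> 'f ncpoly set" for f0 where
  gen: "f0 \<in> Tideal f0"
| add: "p \<in> Tideal f0 \<Longrightarrow> r \<in> Tideal f0 \<Longrightarrow> padd p r \<in> Tideal f0"
| smult: "p \<in> Tideal f0 \<Longrightarrow> psmult c p \<in> Tideal f0"
| lmul: "p \<in> Tideal f0 \<Longrightarrow> is_ncpoly g \<Longrightarrow> pmul g p \<in> Tideal f0"
| rmul: "p \<in> Tideal f0 \<Longrightarrow> is_ncpoly g \<Longrightarrow> pmul p g \<in> Tideal f0"
| subst: "p \<in> Tideal f0 \<Longrightarrow> (\<forall>i. is_ncpoly (s i)) \<Longrightarrow> psubst s p \<in> Tideal f0"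

definition peval :: "('f::field) alg \<Rightarrow> (nat \<Rightarrow> 'f vec) \<Rightarrow> 'f ncpoly \<Rightarrow> 'f vec" where
  "peval A \<phi> p = (\<lambda>t. \<Sum>w\<in>{w. p w \<noteq> 0}. p w * aprod A (map \<phi> w) t)"

definition is_identity :: "('f::field) alg \<Rightarrow> 'f ncpoly \<Rightarrow> bool" where
  "is_identity A p \<longleftrightarrow> (\<forall>\<phi>. (\<forall>x. \<phi> x \<in> acarrier A) \<longrightarrow> peval A \<phi> p = azero)"

definition multilinear :: "('f::field) ncpoly \<Rightarrow> bool" where
  "multilinear p \<longleftrightarrow> is_ncpoly p \<and> (\<exists>V. \<forall>w. p w \<noteq> 0 \<longrightarrow> distinct w \<and> set w = V)"

definition pvars :: "('f::field) ncpoly \<Rightarrow> nat set" where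
  "pvars p = \<Union>{set w | w. p w \<noteq> 0}"

definition basis_set :: "nat \<Rightarrow> (nat \<Rightarrow> nat) \<Rightarrow> (nat \<Rightarrow> nat \<Rightarrow> nat \<Rightarrow> ('f::field) vec)
    \<Rightarrow> nat \<Rightarrow> (nat \<Rightarrow> 'f vec) \<Rightarrow> 'f vec set" where
  "basis_set q n e d js = {e i k l | i k l. i < q \<and> k < n i \<and> l < n i} \<union> {js m | m. m < d}"

definition admissible :: "nat \<Rightarrow> (nat \<Rightarrow> nat) \<Rightarrow> (nat \<Rightarrow> nat \<Rightarrow> nat \<Rightarrow> ('f::field) vec)
    \<Rightarrow> nat \<Rightarrow> (nat \<Rightarrow> 'f vec) \<Rightarrow> 'f ncpoly \<Rightarrow> (nat \<Rightarrow> 'f vec) \<Rightarrow> bool" where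
  "admissible q n e d js p \<phi> \<longleftrightarrow> (\<forall>x\<in>pvars p. \<phi> x \<in> basis_set q n e d js)"

definition weakly_full :: "('f::field) alg \<Rightarrow> nat \<Rightarrow> (nat \<Rightarrow> nat) \<Rightarrow> (nat \<Rightarrow> nat \<Rightarrow> nat \<Rightarrow> 'f vec)
    \<Rightarrow> nat \<Rightarrow> (nat \<Rightarrow> 'f vec) \<Rightarrow> 'f ncpoly \<Rightarrow> bool" where
  "weakly_full A q n e d js p \<longleftrightarrow> multilinear p \<and>
     (\<exists>\<phi>. admissible q n e d js p \<phi> \<and> peval A \<phi> p \<noteq> azero \<and>
        (\<forall>i<q. \<exists>x\<in>pvars p. \<exists>k<n i. \<exists>l<n i. \<phi> x = e i k l))"

definition strongly_full :: "('f::field) alg \<Rightarrow> nat \<Rightarrow> (nat \<Rightarrow> nat) \<Rightarrow> (nat \<Rightarrow> nat \<Rightarrow> nat \<Rightarrow> 'f vec)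
    \<Rightarrow> nat \<Rightarrow> (nat \<Rightarrow> 'f vec) \<Rightarrow> 'f ncpoly \<Rightarrow> bool" where
  "strongly_full A q n e d js p \<longleftrightarrow> multilinear p \<and> \<not> is_identity A p \<and>
     (\<forall>\<phi>. admissible q n e d js p \<phi> \<and> peval A \<phi> p \<noteq> azero \<longrightarrow>
        (\<forall>i<q. \<forall>k<n i. \<forall>l<n i. \<exists>x\<in>pvars p. \<phi> x = e i k l))"

end

theory Submission
  imports Defs "HOL-Combinatorics.Permutations" "HOL-Library.Nat_Bijection"
begin

text \<open>Choose a nonzero admissible evaluation of \<open>f\<^sub>0\<close> in which, for every simple component
  \<open>A\<^sub>i\<close>, some variable \<open>z\<^sub>i\<close> takes a value \<open>e\<^sup>i\<^sub>k\<^sub>l\<close>. Substitute \<open>z\<^sub>i Q\<^sub>i\<close> for \<open>z\<^sub>i\<close>, where \<open>Q\<^sub>i\<close> is a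
  product of \<open>R\<close> blocks and the \<open>b\<close>-th block is \<open>\<Prod>\<^sub>t Y\<^sub>b\<^sub>i\<^sub>t X\<^sub>b\<^sub>i\<^sub>t Z\<^sub>b\<^sub>i\<^sub>t\<close> over \<open>t < n\<^sub>i\<^sup>2\<close>, and
  alternate the result in the \<open>X\<close>-variables of each block; this is \<open>f\<^sub>A\<close>.
  Evaluating \<open>Y, X, Z\<close> at \<open>e\<^sup>i\<^sub>l\<^sub>r, e\<^sup>i\<^sub>r\<^sub>s, e\<^sup>i\<^sub>s\<^sub>l\<close>, where \<open>t\<close> runs through the pairs \<open>(r, s)\<close>,
  reproduces the evaluation of \<open>f\<^sub>0\<close> in the identity summand and kills all others, so \<open>f\<^sub>A\<close> is
  not an identity of \<open>A\<close>.
  Conversely, \<open>R\<close> exceeds the nilpotency bounds of the radicals, so in every nonzero admissible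
  evaluation (on \<open>A\<close> or on some \<open>B\<^sub>j\<close>) some block takes only semisimple values, and by
  alternation its \<open>\<Sum>\<^sub>i n\<^sub>i\<^sup>2\<close> variables \<open>X\<close> take pairwise distinct values. On \<open>A\<close> these exhaust the
  semisimple basis, so \<open>f\<^sub>A\<close> is strongly full. On \<open>B\<^sub>j\<close> each \<open>Q\<^sub>i\<close>-segment of the block is a
  nonzero product of matrix units and hence lies in a single simple component, which yields a
  covering of \<open>p\<^sub>A\<close> by \<open>p\<^sub>B\<^sub>j\<close>. So \<open>f\<^sub>A\<close> vanishes on the basis of each \<open>B\<^sub>j\<close>, hence (being
  multilinear) on \<open>B\<^sub>j\<close>, and therefore on their direct sum.\<close>

section \<open>Products in algebras given by structure constants\<close>

lemma amul_carrier [simp]: "amul A x y \<in> acarrier A"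
  by (simp add: amul_def acarrier_def)

lemma azero_carrier [simp]: "azero \<in> acarrier A"
  by (simp add: azero_def acarrier_def)

lemma amul_azero_left [simp]: "amul A azero y = azero"
  by (simp add: amul_def azero_def fun_eq_iff)

lemma amul_azero_right [simp]: "amul A x azero = azero"
  by (simp add: amul_def azero_def fun_eq_iff)

lemma amul_aadd_left: "amul A (aadd x y) z = aadd (amul A x z) (amul A y z)"
  by (simp add: amul_def aadd_def fun_eq_iff distrib_right sum.distrib)

lemma amul_aadd_right: "amul A z (aadd x y) = aadd (amul A z x) (amul A z y)"
  by (simp add: amul_def aadd_def fun_eq_iff distrib_left distrib_right sum.distrib)

lemma amul_ascale_left: "amul A (ascale c x) y = ascale c (amul A x y)"
  by (simp add: amul_def ascale_def fun_eq_iff sum_distrib_left mult.assoc)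

lemma amul_ascale_right: "amul A x (ascale c y) = ascale c (amul A x y)"
  by (simp add: amul_def ascale_def fun_eq_iff sum_distrib_left mult.assoc mult.left_commute)

lemma is_alg_assoc:
  "is_alg A \<Longrightarrow> x \<in> acarrier A \<Longrightarrow> y \<in> acarrier A \<Longrightarrow> z \<in> acarrier A \<Longrightarrow>
    amul A (amul A x y) z = amul A x (amul A y z)"
  unfolding is_alg_def by blast

lemma aprod_Cons: "ys \<noteq> [] \<Longrightarrow> aprod A (x # ys) = amul A x (aprod A ys)"
  by (cases ys) auto

lemma aprod_carrier: "set xs \<subseteq> acarrier A \<Longrightarrow> aprod A xs \<in> acarrier A"
  by (induction A xs rule: aprod.induct) auto

lemma aprod_azero: "azero \<in> set xs \<Longrightarrow> aprod A xs = azero"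
  by (induction A xs rule: aprod.induct) auto

lemma aprod_append:
  assumes "is_alg A" "set xs \<subseteq> acarrier A" "set ys \<subseteq> acarrier A" "xs \<noteq> []" "ys \<noteq> []"
  shows "aprod A (xs @ ys) = amul A (aprod A xs) (aprod A ys)"
  using assms(2,4)
proof (induction xs)
  case Nil
  then show ?case by simp
next
  case (Cons x xs)
  show ?case
  proof (cases "xs = []")
    case True
    then show ?thesis using assms(5) by (simp add: aprod_Cons)
  next
    case False
    have "aprod A ((x # xs) @ ys) = amul A x (amul A (aprod A xs) (aprod A ys))"
      using Cons False assms(5) by (simp add: aprod_Cons)
    also have "\<dots> = amul A (aprod A (x # xs)) (aprod A ys)"
      using is_alg_assoc[OF assms(1)] Cons.prems aprod_carrier[of xs A] aprod_carrier[OF assms(3)] False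
      by (simp add: aprod_Cons)
    finally show ?thesis .
  qed
qed

lemma aprod_mult_adjacent:
  assumes "is_alg A" "set xs \<subseteq> acarrier A" "set ys \<subseteq> acarrier A" "a \<in> acarrier A" "b \<in> acarrier A"
  shows "aprod A (xs @ a # b # ys) = aprod A (xs @ amul A a b # ys)"
  using assms(2)
proof (induction xs)
  case Nil
  show ?case
    using is_alg_assoc[OF assms(1,4,5) aprod_carrier[OF assms(3)]] by (cases ys) (auto simp: aprod_Cons)
next
  case (Cons x xs)
  then show ?case by (simp add: aprod_Cons)
qed

lemma aprod_nonzero_adjacent:
  assumes "is_alg A" "set (xs @ a # b # ys) \<subseteq> acarrier A" "aprod A (xs @ a # b # ys) \<noteq> azero"
  shows "amul A a b \<noteq> azero"
proof
  assume "amul A a b = azero"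
  then have "aprod A (xs @ a # b # ys) = azero"
    using aprod_mult_adjacent[OF assms(1)] assms(2) by (simp add: aprod_azero)
  with assms(3) show False by simp
qed

lemma aprod_zero_triple:
  assumes "is_alg A" "set (xs @ a # b # c # ys) \<subseteq> acarrier A" "amul A (amul A a b) c = azero"
  shows "aprod A (xs @ a # b # c # ys) = azero"
proof -
  have "aprod A (xs @ a # b # c # ys) = aprod A (xs @ amul A a b # c # ys)"
    by (rule aprod_mult_adjacent) (use assms(1,2) in auto)
  also have "\<dots> = aprod A (xs @ amul A (amul A a b) c # ys)"
    by (rule aprod_mult_adjacent) (use assms(1,2) in auto)
  finally show ?thesis using assms(3) by (simp add: aprod_azero)
qed

lemma aprod_aadd: "aprod A (xs @ aadd u v # ys) = aadd (aprod A (xs @ u # ys)) (aprod A (xs @ v # ys))"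
proof (induction xs)
  case Nil
  then show ?case by (cases ys) (auto simp: aprod_Cons amul_aadd_left)
next
  case (Cons x xs)
  then show ?case by (simp add: aprod_Cons amul_aadd_right)
qed

lemma aprod_ascale: "aprod A (xs @ ascale c u # ys) = ascale c (aprod A (xs @ u # ys))"
proof (induction xs)
  case Nil
  then show ?case by (cases ys) (auto simp: aprod_Cons amul_ascale_left)
next
  case (Cons x xs)
  then show ?case by (simp add: aprod_Cons amul_ascale_right)
qed

lemma aprod_absorb_concat:
  assumes "is_alg A" "a \<in> acarrier A"
    and "\<forall>u\<in>set us. set u \<subseteq> acarrier A \<and> aprod A (a # u) = a"
  shows "aprod A (a # concat us) = a"
  using assms(3)
proof (induction us)
  case Nil
  then show ?case by simp
next
  case (Cons u us)
  then have IH: "aprod A (a # concat us) = a" and u: "set u \<subseteq> acarrier A" "aprod A (a # u) = a"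
    by auto
  consider "u = []" | "concat us = []" | "u \<noteq> []" "concat us \<noteq> []" by blast
  then show ?case
  proof cases
    case 1
    with IH show ?thesis by simp
  next
    case 2
    with u show ?thesis by (simp add: 2)
  next
    case 3
    have rest: "set (concat us) \<subseteq> acarrier A" using Cons.prems by auto
    have "aprod A ((a # u) @ concat us) = amul A (aprod A (a # u)) (aprod A (concat us))"
      by (rule aprod_append) (use assms(1,2) u rest 3 in auto)
    also have "\<dots> = aprod A (a # concat us)" using u 3 by (simp add: aprod_Cons)
    finally show ?thesis using IH by simp
  qed
qed

lemma aprod_collect_ideal_factors:
  assumes "is_alg A" "is_ideal A I" "set xs \<subseteq> acarrier A" "0 < length (filter (\<lambda>x. x \<in> I) xs)"
  shows "\<exists>ys. length ys = length (filter (\<lambda>x. x \<in> I) xs) \<and> set ys \<subseteq> I \<and> aprod A xs = aprod A ys"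
  using assms(3,4)
proof (induction xs)
  case Nil
  then show ?case by simp
next
  case (Cons x xs)
  have IC: "I \<subseteq> acarrier A"
    and Imul: "\<And>a y. a \<in> acarrier A \<Longrightarrow> y \<in> I \<Longrightarrow> amul A a y \<in> I \<and> amul A y a \<in> I"
    using assms(2) unfolding is_ideal_def by auto
  show ?case
  proof (cases "length (filter (\<lambda>x. x \<in> I) xs) = 0")
    case True
    have "x \<in> I" using Cons.prems(2) True by (cases "x \<in> I") auto
    then have "aprod A (x # xs) \<in> I"
      using Imul[of "aprod A xs" x] aprod_carrier[of xs A] Cons.prems by (cases xs) (auto simp: aprod_Cons)
    then show ?thesis using True \<open>x \<in> I\<close> by (intro exI[of _ "[aprod A (x # xs)]"]) simp
  next
    case False
    then obtain ys where ys: "length ys = length (filter (\<lambda>x. x \<in> I) xs)" "set ys \<subseteq> I"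
        "aprod A xs = aprod A ys"
      using Cons by auto
    then obtain y1 ys' where y1: "ys = y1 # ys'" using False by (cases ys) auto
    have xs: "xs \<noteq> []" using False by auto
    show ?thesis
    proof (cases "x \<in> I")
      case True
      then show ?thesis using ys xs y1 by (intro exI[of _ "x # ys"]) (auto simp: aprod_Cons)
    next
      case False
      have "aprod A (x # xs) = aprod A ([] @ x # y1 # ys')" using ys(3) xs y1 by (simp add: aprod_Cons)
      also have "\<dots> = aprod A ([] @ amul A x y1 # ys')"
        by (rule aprod_mult_adjacent) (use assms(1) Cons.prems ys(2) y1 IC in auto)
      finally show ?thesis using ys y1 False Imul[of x y1] Cons.prems
        by (intro exI[of _ "amul A x y1 # ys'"]) auto
    qed
  qed
qed

lemma aprod_nilpotent_ideal:
  assumes "is_alg A" "is_ideal A I" "0 < N"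
    and "\<forall>ys. length ys = N \<longrightarrow> set ys \<subseteq> I \<longrightarrow> aprod A ys = azero"
    and "set xs \<subseteq> acarrier A" "N \<le> length (filter (\<lambda>x. x \<in> I) xs)"
  shows "aprod A xs = azero"
proof -
  have "0 < length (filter (\<lambda>x. x \<in> I) xs)" using assms(3,6) by linarith
  then obtain ys where ys: "length ys = length (filter (\<lambda>x. x \<in> I) xs)" "set ys \<subseteq> I"
      "aprod A xs = aprod A ys"
    using aprod_collect_ideal_factors[OF assms(1,2,5)] by blast
  have IC: "I \<subseteq> acarrier A" using assms(2) unfolding is_ideal_def by auto
  have head: "aprod A (take N ys) = azero"
    using assms(4,6) ys(1,2) set_take_subset[of N ys] by auto
  show ?thesis
  proof (cases "drop N ys = []")
    case True
    then show ?thesis using head ys(3) by simp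
  next
    case False
    have "aprod A (take N ys @ drop N ys) = amul A (aprod A (take N ys)) (aprod A (drop N ys))"
      by (rule aprod_append)
        (use assms(1,3,6) False ys IC set_take_subset[of N ys] set_drop_subset[of N ys] in auto)
    then show ?thesis using head ys(3) by simp
  qed
qed

definition rad_nil_bound :: "('f::field) alg \<Rightarrow> nat \<Rightarrow> (nat \<Rightarrow> 'f vec) \<Rightarrow> nat \<Rightarrow> bool" where
  "rad_nil_bound A d js R \<longleftrightarrow> (\<forall>xs. set xs \<subseteq> acarrier A \<longrightarrow>
     R \<le> length (filter (\<lambda>x. x \<in> js ` {..<d}) xs) \<longrightarrow> aprod A xs = azero)"

lemma rad_nil_bound_mono: "rad_nil_bound A d js R \<Longrightarrow> R \<le> R' \<Longrightarrow> rad_nil_bound A d js R'"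
  unfolding rad_nil_bound_def by auto

lemma length_filter_image_le_sum:
  fixes d :: nat
  shows "length (filter (\<lambda>x. x \<in> f ` {..<d}) xs) \<le> (\<Sum>m<d. length (filter (\<lambda>x. x = f m) xs))"
proof (induction xs)
  case Nil
  then show ?case by simp
next
  case (Cons x xs)
  have split: "(\<Sum>m<d. length (filter (\<lambda>y. y = f m) (x # xs))) =
      (\<Sum>m<d. length (filter (\<lambda>y. y = f m) xs)) + (\<Sum>m<d. if x = f m then 1 else 0)"
    by (auto simp: sum.distrib[symmetric] intro!: sum.cong)
  show ?case
  proof (cases "x \<in> f ` {..<d}")
    case True
    then obtain m0 where m0: "m0 < d" "x = f m0" by auto
    have "(if x = f m0 then 1 else 0) \<le> (\<Sum>m<d. if x = f m then 1 else 0::nat)"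
      by (rule member_le_sum) (use m0 in auto)
    then show ?thesis using Cons split True m0 by simp
  next
    case False
    then show ?thesis using Cons split by simp
  qed
qed

lemma is_WM_D:
  assumes "is_WM A q n e d js"
  shows "\<forall>i<q. 0 < n i"
    and "\<forall>i<q. \<forall>k<n i. \<forall>l<n i. e i k l \<in> acarrier A"
    and "\<forall>m<d. js m \<in> acarrier A"
    and "\<forall>i<q. \<forall>k<n i. \<forall>l<n i. \<forall>i'<q. \<forall>k'<n i'. \<forall>l'<n i'.
        amul A (e i k l) (e i' k' l') = (if i = i' \<and> l = k' then e i k l' else azero)"
    and "\<forall>a b. aadd (ss_comb q n e a) (rad_comb d js b) = azero \<longrightarrow>
        (\<forall>i<q. \<forall>k<n i. \<forall>l<n i. a i k l = 0) \<and> (\<forall>m<d. b m = 0)"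
    and "\<forall>x\<in>acarrier A. \<exists>a b. x = aadd (ss_comb q n e a) (rad_comb d js b)"
    and "range (rad_comb d js) = jac_rad A"
  using assms unfolding is_WM_def by simp_all

lemma WM_pos: "is_WM A q n e d js \<Longrightarrow> i < q \<Longrightarrow> 0 < n i"
  using is_WM_D(1) by blast

lemma WM_e_carrier: "is_WM A q n e d js \<Longrightarrow> i < q \<Longrightarrow> k < n i \<Longrightarrow> l < n i \<Longrightarrow> e i k l \<in> acarrier A"
  using is_WM_D(2) by blast

lemma WM_js_carrier: "is_WM A q n e d js \<Longrightarrow> m < d \<Longrightarrow> js m \<in> acarrier A"
  using is_WM_D(3) by blast

lemma WM_mult:
  "is_WM A q n e d js \<Longrightarrow> i < q \<Longrightarrow> k < n i \<Longrightarrow> l < n i \<Longrightarrow> i' < q \<Longrightarrow> k' < n i' \<Longrightarrow> l' < n i' \<Longrightarrow>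
    amul A (e i k l) (e i' k' l') = (if i = i' \<and> l = k' then e i k l' else azero)"
  using is_WM_D(4) by blast

lemma WM_independent:
  "is_WM A q n e d js \<Longrightarrow> aadd (ss_comb q n e a) (rad_comb d js b) = azero \<Longrightarrow>
    (\<forall>i<q. \<forall>k<n i. \<forall>l<n i. a i k l = 0) \<and> (\<forall>m<d. b m = 0)"
  using is_WM_D(5) by blast

lemma WM_span:
  "is_WM A q n e d js \<Longrightarrow> x \<in> acarrier A \<Longrightarrow> \<exists>a b. x = aadd (ss_comb q n e a) (rad_comb d js b)"
  using is_WM_D(6) by blast

lemma WM_jac_rad: "is_WM A q n e d js \<Longrightarrow> range (rad_comb d js) = jac_rad A"
  using is_WM_D(7) by blast

lemma basis_set_carrier: "is_WM A q n e d js \<Longrightarrow> x \<in> basis_set q n e d js \<Longrightarrow> x \<in> acarrier A"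
  unfolding basis_set_def using WM_e_carrier WM_js_carrier by blast

lemma basis_set_not_radical:
  "x \<in> basis_set q n e d js \<Longrightarrow> x \<notin> js ` {..<d} \<Longrightarrow> \<exists>i k l. i < q \<and> k < n i \<and> l < n i \<and> x = e i k l"
  unfolding basis_set_def by blast

lemma semisimple_basis_eq_image:
  fixes q :: nat and n :: "nat \<Rightarrow> nat"
  shows "{e i k l | i k l. i < q \<and> k < n i \<and> l < n i} = (\<lambda>(i, k, l). e i k l) ` (SIGMA i:{..<q}. {..<n i} \<times> {..<n i})"
  by force

lemma finite_semisimple_basis:
  fixes q :: nat and n :: "nat \<Rightarrow> nat"
  shows "finite {e i k l | i k l. i < q \<and> k < n i \<and> l < n i}"
  unfolding semisimple_basis_eq_image by (intro finite_imageI finite_SigmaI) auto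

lemma card_semisimple_basis_le:
  fixes q :: nat and n :: "nat \<Rightarrow> nat"
  shows "card {e i k l | i k l. i < q \<and> k < n i \<and> l < n i} \<le> (\<Sum>i<q. n i ^ 2)"
proof -
  have "card {e i k l | i k l. i < q \<and> k < n i \<and> l < n i} \<le> card (SIGMA i:{..<q}. {..<n i} \<times> {..<n i})"
    unfolding semisimple_basis_eq_image by (rule card_image_le) auto
  then show ?thesis by (simp add: power2_eq_square)
qed

lemma WM_js_jac_rad:
  assumes "is_WM A q n e d js" "m < d"
  shows "js m \<in> jac_rad A"
proof -
  have "rad_comb d js (\<lambda>m'. if m' = m then 1 else 0) = js m"
    using assms(2) by (simp add: rad_comb_def fun_eq_iff if_distrib[of "\<lambda>c. c * _"] sum.delta cong: if_cong)
  then show ?thesis using WM_jac_rad[OF assms(1)] by (metis rangeI)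
qed

lemma WM_rad_nil_bound:
  assumes "is_alg A" "is_WM A q n e d js"
  shows "\<exists>R. rad_nil_bound A d js R"
proof -
  have "\<forall>m<d. \<exists>I N. is_ideal A I \<and> js m \<in> I \<and> 0 < N \<and>
      (\<forall>ys. length ys = N \<longrightarrow> set ys \<subseteq> I \<longrightarrow> aprod A ys = azero)"
    using WM_js_jac_rad[OF assms(2)] unfolding jac_rad_def nilpotent_set_def by blast
  then obtain I N where I: "\<And>m. m < d \<Longrightarrow> is_ideal A (I m) \<and> js m \<in> I m \<and> 0 < N m \<and>
      (\<forall>ys. length ys = N m \<longrightarrow> set ys \<subseteq> I m \<longrightarrow> aprod A ys = azero)"
    by metis
  have "rad_nil_bound A d js (Suc (\<Sum>m<d. N m))"
    unfolding rad_nil_bound_def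
  proof (intro allI impI)
    fix xs assume xs: "set xs \<subseteq> acarrier A"
      and many: "Suc (\<Sum>m<d. N m) \<le> length (filter (\<lambda>x. x \<in> js ` {..<d}) xs)"
    have "\<exists>m<d. N m \<le> length (filter (\<lambda>x. x = js m) xs)"
    proof (rule ccontr)
      assume "\<not> ?thesis"
      then have "(\<Sum>m<d. length (filter (\<lambda>x. x = js m) xs)) \<le> (\<Sum>m<d. N m)"
        by (intro sum_mono) (force simp: not_le)
      then show False using many length_filter_image_le_sum[of js d xs] by linarith
    qed
    then obtain m where m: "m < d" "N m \<le> length (filter (\<lambda>x. x = js m) xs)" by blast
    have "length (filter (\<lambda>x. x = js m) xs) \<le> length (filter (\<lambda>x. x \<in> I m) xs)"
      using I[OF m(1)] by (induction xs) auto
    then show "aprod A xs = azero"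
      using aprod_nilpotent_ideal[OF assms(1), of "I m" "N m" xs] I[OF m(1)] m xs by auto
  qed
  then show ?thesis ..
qed

lemma sum_if_const_cond: "(\<Sum>x\<in>S. if P then f x else 0) = (if P then sum f S else 0)"
  by (cases P) simp_all

lemma WM_e_nonzero:
  assumes WM: "is_WM A q n e d js" and ikl: "i < q" "k < n i" "l < n i"
  shows "e i k l \<noteq> azero"
proof
  assume ez: "e i k l = azero"
  define a where "a = (\<lambda>i' k' l'. if i' = i \<and> k' = k \<and> l' = l then 1 else 0 :: 'a)"
  have "ss_comb q n e a t = (\<Sum>i'<q. \<Sum>k'<n i'. \<Sum>l'<n i'.
      if i' = i then if k' = k then if l' = l then e i k l t else 0 else 0 else 0)" for t
    unfolding ss_comb_def a_def by (intro sum.cong refl) auto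
  then have "ss_comb q n e a = e i k l"
    using ikl by (simp add: fun_eq_iff sum_if_const_cond)
  moreover have "rad_comb d js (\<lambda>_. 0) = azero" by (simp add: rad_comb_def azero_def fun_eq_iff)
  ultimately have "aadd (ss_comb q n e a) (rad_comb d js (\<lambda>_. 0)) = azero"
    using ez by (simp add: aadd_def azero_def fun_eq_iff)
  then have "a i k l = 0" using WM_independent[OF WM] ikl by blast
  then show False by (simp add: a_def)
qed

lemma WM_e_eq_imp_same_comp:
  assumes WM: "is_WM A q n e d js" and "i < q" "k < n i" "l < n i" "j < q" "k' < n j" "l' < n j"
    and eq: "e i k l = e j k' l'"
  shows "i = j"
proof (rule ccontr)
  assume "i \<noteq> j"
  then have "amul A (e j k' l') (e i l l) = azero" using WM_mult[OF WM] assms(2-7) by simp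
  moreover have "amul A (e i k l) (e i l l) = e i k l" using WM_mult[OF WM] assms(2-4) by simp
  ultimately show False using eq WM_e_nonzero[OF WM assms(2-4)] by simp
qed

lemma WM_sandwich_zero:
  assumes WM: "is_WM A q n e d js" and "i < q" "k < n i" "r < n i" "s < n i" "l < n i"
    and "i' < q" "r' < n i'" "s' < n i'" and ne: "(i', r', s') \<noteq> (i, r, s)"
  shows "amul A (amul A (e i k r) (e i' r' s')) (e i s l) = azero"
proof (cases "i' = i \<and> r' = r")
  case True
  then have "amul A (e i k r) (e i' r' s') = e i k s'" using WM_mult[OF WM assms(2,3,4,7,8,9)] by simp
  moreover have "s' \<noteq> s" "s' < n i" using ne True assms(9) by auto
  ultimately show ?thesis using WM_mult[OF WM assms(2,3) _ assms(2,5,6)] by simp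
next
  case False
  then have "amul A (e i k r) (e i' r' s') = azero" using WM_mult[OF WM assms(2,3,4,7,8,9)] by auto
  then show ?thesis by simp
qed

lemma WM_chain_same_comp:
  assumes WM: "is_WM A q n e d js"
  shows "xs \<noteq> [] \<Longrightarrow> \<forall>x\<in>set xs. \<exists>c k l. c < q \<and> k < n c \<and> l < n c \<and> x = e c k l \<Longrightarrow>
    (\<forall>s1 a b s2. xs = s1 @ a # b # s2 \<longrightarrow> amul A a b \<noteq> azero) \<Longrightarrow>
    \<exists>c<q. \<forall>x\<in>set xs. \<exists>k<n c. \<exists>l<n c. x = e c k l"
proof (induction xs rule: induct_list012)
  case 1
  then show ?case by simp
next
  case (2 x)
  then show ?case by auto
next
  case (3 x y zs)
  have "\<forall>s1 a b s2. y # zs = s1 @ a # b # s2 \<longrightarrow> amul A a b \<noteq> azero"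
    using "3.prems"(3) by (metis append_Cons)
  then obtain c where c: "c < q" "\<forall>x\<in>set (y # zs). \<exists>k<n c. \<exists>l<n c. x = e c k l"
    using "3.IH"(2) "3.prems"(2) by auto
  obtain k2 l2 where y: "k2 < n c" "l2 < n c" "y = e c k2 l2" using c by auto
  obtain c' k l where x: "c' < q" "k < n c'" "l < n c'" "x = e c' k l" using "3.prems"(2) by auto
  have "amul A x y \<noteq> azero" using "3.prems"(3) by (metis append_Nil)
  then have "c' = c" using WM_mult[OF WM x(1,2,3) c(1) y(1,2)] x y by (auto split: if_splits)
  then show ?case using c x by auto
qed

section \<open>Noncommutative polynomials\<close>

definition psupp :: "('f::field) ncpoly \<Rightarrow> nat list set" where
  "psupp p = {w. p w \<noteq> 0}"

definition pmono :: "nat list \<Rightarrow> ('f::field) ncpoly" where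
  "pmono u = (\<lambda>w. if w = u then 1 else 0)"

definition ren :: "(nat \<Rightarrow> nat) \<Rightarrow> ('f::field) ncpoly \<Rightarrow> 'f ncpoly" where
  "ren \<sigma> p = (\<lambda>w. p (map \<sigma> w))"

lemma pvarsI: "p w \<noteq> 0 \<Longrightarrow> v \<in> set w \<Longrightarrow> v \<in> pvars p"
  unfolding pvars_def by blast

lemma pmono_ncpoly: "u \<noteq> [] \<Longrightarrow> is_ncpoly (pmono u)"
  unfolding is_ncpoly_def pmono_def by auto

lemma peval_superset:
  assumes "finite W" "psupp p \<subseteq> W"
  shows "peval A \<phi> p = (\<lambda>t. \<Sum>w\<in>W. p w * aprod A (map \<phi> w) t)"
  unfolding peval_def fun_eq_iff
  by (intro allI sum.mono_neutral_left) (use assms in \<open>auto simp: psupp_def\<close>)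

lemma peval_cong:
  assumes "\<forall>v\<in>pvars p. \<phi> v = \<phi>' v"
  shows "peval A \<phi> p = peval A \<phi>' p"
proof -
  have eq: "map \<phi> w = map \<phi>' w" if "w \<in> {w. p w \<noteq> 0}" for w
    using assms pvarsI[of p w] that by (simp add: map_eq_conv)
  show ?thesis unfolding peval_def
    by (intro ext sum.cong refl) (simp only: eq)
qed

lemma peval_nonzero_imp_word:
  assumes "peval A \<phi> p \<noteq> azero"
  obtains w where "p w \<noteq> 0" "aprod A (map \<phi> w) \<noteq> azero"
proof -
  have "\<exists>w. p w \<noteq> 0 \<and> aprod A (map \<phi> w) \<noteq> azero"
  proof (rule ccontr)
    assume "\<nexists>w. p w \<noteq> 0 \<and> aprod A (map \<phi> w) \<noteq> azero"
    then have "peval A \<phi> p = azero"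
      by (auto simp: peval_def azero_def fun_eq_iff intro!: sum.neutral)
    with assms show False by simp
  qed
  then show thesis using that by blast
qed

lemma peval_sum:
  assumes "finite F" "\<forall>s\<in>F. finite (psupp (h s))"
  shows "peval A \<phi> (\<lambda>w. \<Sum>s\<in>F. c s * h s w) = (\<lambda>t. \<Sum>s\<in>F. c s * peval A \<phi> (h s) t)"
proof -
  define W where "W = (\<Union>s\<in>F. psupp (h s))"
  have fW: "finite W" using assms unfolding W_def by auto
  have "psupp (\<lambda>w. \<Sum>s\<in>F. c s * h s w) \<subseteq> W"
    unfolding W_def psupp_def by (force intro: ccontr[of "_ \<in> _"] sum.neutral)
  then have "peval A \<phi> (\<lambda>w. \<Sum>s\<in>F. c s * h s w) =
      (\<lambda>t. \<Sum>w\<in>W. (\<Sum>s\<in>F. c s * h s w) * aprod A (map \<phi> w) t)"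
    by (rule peval_superset[OF fW])
  also have "\<dots> = (\<lambda>t. \<Sum>s\<in>F. c s * (\<Sum>w\<in>W. h s w * aprod A (map \<phi> w) t))"
    by (simp add: sum_distrib_left sum_distrib_right mult.assoc sum.swap[of _ W F])
  also have "\<dots> = (\<lambda>t. \<Sum>s\<in>F. c s * peval A \<phi> (h s) t)"
  proof -
    have "peval A \<phi> (h s) = (\<lambda>t. \<Sum>w\<in>W. h s w * aprod A (map \<phi> w) t)" if "s \<in> F" for s
      by (rule peval_superset[OF fW]) (use that in \<open>auto simp: W_def\<close>)
    then show ?thesis by (auto simp: fun_eq_iff intro!: sum.cong)
  qed
  finally show ?thesis .
qed

lemma psupp_ren: "bij \<sigma> \<Longrightarrow> psupp (ren \<sigma> p) = map (inv \<sigma>) ` psupp p"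
proof -
  assume b: "bij \<sigma>"
  have 1: "map \<sigma> (map (inv \<sigma>) w) = w" for w using b by (simp add: map_idI bij_is_surj surj_f_inv_f)
  have 2: "map (inv \<sigma>) (map \<sigma> w) = w" for w using b by (simp add: map_idI bij_is_inj inv_f_f)
  show ?thesis unfolding psupp_def ren_def
    using 1 2 by (auto simp: image_iff) (metis 2)
qed

lemma peval_ren:
  assumes "bij \<sigma>"
  shows "peval A \<psi> (ren \<sigma> p) = peval A (\<psi> \<circ> inv \<sigma>) p"
proof -
  have 1: "map (\<sigma> \<circ> inv \<sigma>) w = w" for w using assms by (simp add: map_idI bij_is_surj surj_f_inv_f)
  have inj: "inj (map (inv \<sigma>))" using assms by (simp add: bij_imp_bij_inv bij_is_inj inj_mapI)
  have "peval A \<psi> (ren \<sigma> p) = (\<lambda>t. \<Sum>w\<in>map (inv \<sigma>) ` psupp p. ren \<sigma> p w * aprod A (map \<psi> w) t)"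
    unfolding peval_def psupp_ren[OF assms, symmetric] by (simp add: psupp_def)
  also have "\<dots> = (\<lambda>t. \<Sum>w\<in>psupp p. p w * aprod A (map (\<psi> \<circ> inv \<sigma>) w) t)"
    by (subst sum.reindex) (auto simp: inj_on_subset[OF inj] ren_def 1)
  also have "\<dots> = peval A (\<psi> \<circ> inv \<sigma>) p" by (simp add: peval_def psupp_def)
  finally show ?thesis .
qed

lemma pmul_pmono:
  assumes "u \<noteq> []" "v \<noteq> []"
  shows "pmul (pmono u) (pmono v) = (pmono (u @ v) :: ('f::field) ncpoly)"
proof
  fix w :: "nat list"
  have split: "(take i w = u \<and> drop i w = v) \<longleftrightarrow> (i = length u \<and> w = u @ v)" if "i \<le> length w" for i
    using that by (metis append_eq_conv_conj append_take_drop_id length_take min.absorb2)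
  have "pmul (pmono u) (pmono v) w = (\<Sum>i\<le>length w. if i = length u \<and> w = u @ v then 1 else 0 :: 'f)"
    unfolding pmul_def pmono_def using split by (auto intro!: sum.cong)
  also have "\<dots> = pmono (u @ v) w"
    by (cases "w = u @ v") (auto simp: pmono_def)
  finally show "pmul (pmono u) (pmono v) w = (pmono (u @ v) w :: 'f)" .
qed

lemma wsubst_pmono:
  assumes "\<forall>v. \<tau> v \<noteq> []"
  shows "w \<noteq> [] \<Longrightarrow> wsubst (\<lambda>v. (pmono (\<tau> v) :: ('f::field) ncpoly)) w = pmono (concat (map \<tau> w))"
proof (induction "(\<lambda>v. (pmono (\<tau> v) :: 'f ncpoly))" w rule: wsubst.induct)
  case (3 x y ys)
  have "concat (map \<tau> (y # ys)) \<noteq> []" using assms by simp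
  then show ?case using 3 assms by (simp add: pmul_pmono)
qed auto

lemma psubst_pmono:
  assumes "\<forall>v. \<tau> v \<noteq> []" "p [] = 0"
  shows "psubst (\<lambda>v. pmono (\<tau> v)) p = (\<lambda>v. \<Sum>w\<in>psupp p. p w * (if v = concat (map \<tau> w) then 1 else 0))"
  unfolding psubst_def fun_eq_iff psupp_def
proof (intro allI sum.cong refl)
  fix v w assume "w \<in> {w. p w \<noteq> 0}"
  then have "w \<noteq> []" using assms(2) by auto
  then have eq: "wsubst (\<lambda>v. pmono (\<tau> v)) w v = pmono (concat (map \<tau> w)) v"
    by (simp add: wsubst_pmono[OF assms(1)])
  show "p w * wsubst (\<lambda>v. pmono (\<tau> v)) w v = p w * (if v = concat (map \<tau> w) then 1 else 0)"
    by (simp only: eq) (simp add: pmono_def)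
qed

lemma psubst_pmono_at_image:
  assumes "\<forall>v. \<tau> v \<noteq> []" "p [] = 0" "finite (psupp p)"
    and "inj_on (\<lambda>w. concat (map \<tau> w)) (insert w (psupp p))"
  shows "psubst (\<lambda>v. pmono (\<tau> v)) p (concat (map \<tau> w)) = p w"
proof -
  have "psubst (\<lambda>v. pmono (\<tau> v)) p (concat (map \<tau> w)) = (\<Sum>w'\<in>psupp p. if w' = w then p w' else 0)"
    unfolding psubst_pmono[of \<tau> p, OF assms(1,2)]
    using assms(4) by (intro sum.cong refl) (auto simp: inj_on_def)
  also have "\<dots> = p w" using assms(3) by (simp add: psupp_def)
  finally show ?thesis .
qed

lemma psubst_pmono_outside_image:
  assumes "\<forall>v. \<tau> v \<noteq> []" "p [] = 0" "v \<notin> (\<lambda>w. concat (map \<tau> w)) ` psupp p"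
  shows "psubst (\<lambda>v. pmono (\<tau> v)) p v = 0"
  using assms by (auto simp: psubst_pmono intro!: sum.neutral)

lemma ren_eq_psubst:
  assumes "bij \<sigma>" "p [] = 0" "finite (psupp p)"
  shows "ren \<sigma> p = psubst (\<lambda>v. pmono [inv \<sigma> v]) p"
proof
  fix v
  have cm: "concat (map (\<lambda>v. [inv \<sigma> v]) w) = map (inv \<sigma>) w" for w by (induction w) auto
  have inj: "inj (map (inv \<sigma>))" using assms by (simp add: bij_imp_bij_inv bij_is_inj inj_mapI)
  have "map (inv \<sigma>) (map \<sigma> v) = v" using assms by (simp add: map_idI bij_is_inj inv_f_f)
  then have cm_inv: "concat (map (\<lambda>v. [inv \<sigma> v]) (map \<sigma> v)) = v" by (simp only: cm)
  have "psubst (\<lambda>v. pmono [inv \<sigma> v]) p (concat (map (\<lambda>v. [inv \<sigma> v]) (map \<sigma> v))) = p (map \<sigma> v)"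
  proof (rule psubst_pmono_at_image)
    show "inj_on (\<lambda>w. concat (map (\<lambda>v. [inv \<sigma> v]) w)) (insert (map \<sigma> v) (psupp p))"
      unfolding cm using inj_on_subset[OF inj] by blast
  qed (use assms in auto)
  then show "ren \<sigma> p v = psubst (\<lambda>v. pmono [inv \<sigma> v]) p v" unfolding ren_def cm_inv by simp
qed

lemma aprod_map_concat:
  assumes "is_alg A" "\<forall>v. \<tau> v \<noteq> []" "\<forall>v. \<psi> v \<in> acarrier A"
  shows "w \<noteq> [] \<Longrightarrow> aprod A (map \<psi> (concat (map \<tau> w))) = aprod A (map (\<lambda>v. aprod A (map \<psi> (\<tau> v))) w)"
proof (induction w)
  case Nil
  then show ?case by simp
next
  case (Cons v w)
  show ?case
  proof (cases "w = []")
    case True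
    then show ?thesis by simp
  next
    case False
    have "concat (map \<tau> w) \<noteq> []" using False assms(2) by (cases w) auto
    then have "aprod A (map \<psi> (\<tau> v) @ map \<psi> (concat (map \<tau> w))) =
        amul A (aprod A (map \<psi> (\<tau> v))) (aprod A (map \<psi> (concat (map \<tau> w))))"
      by (intro aprod_append) (use assms in auto)
    then show ?thesis using Cons False by (simp add: aprod_Cons)
  qed
qed

lemma peval_psubst_pmono:
  assumes "is_alg A" "\<forall>v. \<psi> v \<in> acarrier A" "\<forall>v. \<tau> v \<noteq> []" "p [] = 0" "finite (psupp p)"
    and "inj_on (\<lambda>w. concat (map \<tau> w)) (psupp p)"
  shows "peval A \<psi> (psubst (\<lambda>v. pmono (\<tau> v)) p) = peval A (\<lambda>v. aprod A (map \<psi> (\<tau> v))) p"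
proof -
  let ?cm = "\<lambda>w. concat (map \<tau> w)"
  let ?q = "psubst (\<lambda>v. pmono (\<tau> v)) p"
  have "psupp ?q \<subseteq> ?cm ` psupp p"
    using psubst_pmono_outside_image[of \<tau> p, OF assms(3,4)] by (auto simp: psupp_def)
  then have "peval A \<psi> ?q = (\<lambda>t. \<Sum>v\<in>?cm ` psupp p. ?q v * aprod A (map \<psi> v) t)"
    by (rule peval_superset[rotated]) (use assms(5) in simp)
  also have "\<dots> = (\<lambda>t. \<Sum>w\<in>psupp p. ?q (?cm w) * aprod A (map \<psi> (?cm w)) t)"
    by (subst sum.reindex[OF assms(6)]) simp
  also have "\<dots> = (\<lambda>t. \<Sum>w\<in>psupp p. p w * aprod A (map (\<lambda>v. aprod A (map \<psi> (\<tau> v))) w) t)"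
  proof -
    have "?q (?cm w) = p w" if "w \<in> psupp p" for w
      by (rule psubst_pmono_at_image) (use assms that in \<open>auto simp: insert_absorb\<close>)
    moreover have "aprod A (map \<psi> (?cm w)) = aprod A (map (\<lambda>v. aprod A (map \<psi> (\<tau> v))) w)"
      if "w \<in> psupp p" for w
    proof -
      have "w \<noteq> []" using that assms(4) by (auto simp: psupp_def)
      then show ?thesis using aprod_map_concat[OF assms(1,3,2)] by blast
    qed
    ultimately show ?thesis by (auto simp: fun_eq_iff intro!: sum.cong)
  qed
  also have "\<dots> = peval A (\<lambda>v. aprod A (map \<psi> (\<tau> v))) p" by (simp add: peval_def psupp_def)
  finally show ?thesis .
qed

lemma Tideal_sum:
  assumes "finite F" "F \<noteq> {}" "\<forall>s\<in>F. h s \<in> Tideal f0"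
  shows "(\<lambda>w. \<Sum>s\<in>F. h s w) \<in> Tideal f0"
  using assms
proof (induction F rule: finite_ne_induct)
  case (singleton x)
  then show ?case by simp
next
  case (insert x F)
  have "(\<lambda>w. \<Sum>s\<in>insert x F. h s w) = padd (h x) (\<lambda>w. \<Sum>s\<in>F. h s w)"
    using insert by (simp add: padd_def fun_eq_iff)
  then show ?case using insert by (auto intro: Tideal.add)
qed

lemma multilinear_finite: "multilinear p \<Longrightarrow> finite (psupp p)"
  unfolding multilinear_def is_ncpoly_def psupp_def by blast

lemma multilinear_Nil: "multilinear p \<Longrightarrow> p [] = 0"
  unfolding multilinear_def is_ncpoly_def by blast

lemma multilinear_pvars_finite: "multilinear p \<Longrightarrow> finite (pvars p)"
  unfolding pvars_def using multilinear_finite[of p] by (auto simp: psupp_def)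

lemma multilinear_word: "multilinear p \<Longrightarrow> p w \<noteq> 0 \<Longrightarrow> distinct w \<and> set w = pvars p"
  unfolding multilinear_def pvars_def by blast

lemma multilinear_split_word:
  assumes "multilinear p" "u \<in> pvars p" "p w \<noteq> 0"
  obtains w1 w2 where "w = w1 @ u # w2" "u \<notin> set w1" "u \<notin> set w2"
proof -
  have "u \<in> set w" "distinct w" using multilinear_word[OF assms(1,3)] assms(2) by auto
  moreover obtain w1 w2 where "w = w1 @ u # w2" using \<open>u \<in> set w\<close> split_list by metis
  ultimately show thesis using that by auto
qed

lemma peval_multilinear_azero:
  assumes "multilinear p" "u \<in> pvars p" "\<phi> u = azero"
  shows "peval A \<phi> p = azero"
proof -
  have "aprod A (map \<phi> w) = azero" if "p w \<noteq> 0" for w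
    using multilinear_word[OF assms(1) that] assms(2,3) by (intro aprod_azero) force
  then show ?thesis by (auto simp: peval_def azero_def fun_eq_iff intro!: sum.neutral)
qed

lemma peval_upd_linear:
  assumes "multilinear p" "u \<in> pvars p"
  shows "peval A (\<phi>(u := aadd x y)) p = aadd (peval A (\<phi>(u := x)) p) (peval A (\<phi>(u := y)) p)"
    and "peval A (\<phi>(u := ascale c x)) p = ascale c (peval A (\<phi>(u := x)) p)"
proof -
  have split: "\<exists>w1 w2. \<forall>z. map (\<phi>(u := z)) w = map \<phi> w1 @ z # map \<phi> w2" if w: "p w \<noteq> 0" for w
  proof -
    obtain w1 w2 where "w = w1 @ u # w2" "u \<notin> set w1" "u \<notin> set w2"
      using multilinear_split_word[OF assms w] .
    then show ?thesis by (intro exI[of _ w1] exI[of _ w2]) (auto simp: map_eq_conv)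
  qed
  have add: "aprod A (map (\<phi>(u := aadd x y)) w) =
      aadd (aprod A (map (\<phi>(u := x)) w)) (aprod A (map (\<phi>(u := y)) w))" if "p w \<noteq> 0" for w
    using split[OF that] aprod_aadd by metis
  show "peval A (\<phi>(u := aadd x y)) p = aadd (peval A (\<phi>(u := x)) p) (peval A (\<phi>(u := y)) p)"
    unfolding peval_def aadd_def fun_eq_iff
    using add by (auto simp: aadd_def distrib_left sum.distrib intro!: sum.cong)
  have scale: "aprod A (map (\<phi>(u := ascale c x)) w) = ascale c (aprod A (map (\<phi>(u := x)) w))"
    if "p w \<noteq> 0" for w
    using split[OF that] aprod_ascale by metis
  show "peval A (\<phi>(u := ascale c x)) p = ascale c (peval A (\<phi>(u := x)) p)"
  proof
    fix t
    have "peval A (\<phi>(u := ascale c x)) p t =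
        (\<Sum>w\<in>{w. p w \<noteq> 0}. c * (p w * aprod A (map (\<phi>(u := x)) w) t))"
      unfolding peval_def using scale by (intro sum.cong refl) (simp add: ascale_def mult.left_commute)
    also have "\<dots> = ascale c (peval A (\<phi>(u := x)) p) t"
      by (simp add: peval_def ascale_def sum_distrib_left)
    finally show "peval A (\<phi>(u := ascale c x)) p t = ascale c (peval A (\<phi>(u := x)) p) t" .
  qed
qed

lemma subspace_sum_closed:
  assumes "azero \<in> Z" "\<And>x y. x \<in> Z \<Longrightarrow> y \<in> Z \<Longrightarrow> aadd x y \<in> Z" "finite I" "\<forall>i\<in>I. f i \<in> Z"
  shows "(\<lambda>t. \<Sum>i\<in>I. f i t) \<in> Z"
  using assms(3,4)
proof (induction I rule: finite_induct)
  case empty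
  then show ?case using assms(1) by (simp add: azero_def)
next
  case (insert i I)
  have "(\<lambda>t. \<Sum>i\<in>insert i I. f i t) = aadd (f i) (\<lambda>t. \<Sum>i\<in>I. f i t)"
    using insert by (simp add: aadd_def fun_eq_iff)
  then show ?case using insert assms(2) by auto
qed

lemma WM_carrier_subset_subspace:
  assumes WM: "is_WM A q n e d js"
    and Z0: "azero \<in> Z" and Zadd: "\<And>x y. x \<in> Z \<Longrightarrow> y \<in> Z \<Longrightarrow> aadd x y \<in> Z"
    and Zscale: "\<And>c x. x \<in> Z \<Longrightarrow> ascale c x \<in> Z" and basis: "basis_set q n e d js \<subseteq> Z"
  shows "acarrier A \<subseteq> Z"
proof
  have sum_closed: "(\<lambda>t. \<Sum>i<m. f i t) \<in> Z" if "\<forall>i<m. f i \<in> Z" for m :: nat and f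
    using subspace_sum_closed[OF Z0 Zadd, of "{..<m}" f] that by simp
  have scaled: "(\<lambda>t. c * x t) \<in> Z" if "x \<in> basis_set q n e d js" for c x
    using Zscale[of x c] basis that by (auto simp: ascale_def)
  have scaled_e: "(\<lambda>t. c * e i k l t) \<in> Z" if "i < q" "k < n i" "l < n i" for c i k l
    using that by (intro scaled) (auto simp: basis_set_def)
  have scaled_js: "(\<lambda>t. c * js m t) \<in> Z" if "m < d" for c m
    using that by (intro scaled) (auto simp: basis_set_def)
  fix x assume "x \<in> acarrier A"
  then obtain a b where x: "x = aadd (ss_comb q n e a) (rad_comb d js b)" using WM_span[OF WM] by blast
  have "ss_comb q n e a \<in> Z"
    unfolding ss_comb_def by (auto intro!: sum_closed scaled_e)
  moreover have "rad_comb d js b \<in> Z"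
    unfolding rad_comb_def by (auto intro!: sum_closed scaled_js)
  ultimately show "x \<in> Z" using x Zadd by simp
qed

text \<open>Induction on the set of variables allowed to take arbitrary values; each step uses
  linearity in one variable.\<close>

lemma is_identity_if_basis_evaluations_vanish:
  assumes ml: "multilinear p" and WM: "is_WM A q n e d js"
    and basis: "\<forall>\<phi>. (\<forall>v\<in>pvars p. \<phi> v \<in> basis_set q n e d js) \<longrightarrow> peval A \<phi> p = azero"
  shows "is_identity A p"
proof -
  have "\<forall>\<phi>. (\<forall>v\<in>pvars p - U. \<phi> v \<in> basis_set q n e d js) \<longrightarrow> (\<forall>v\<in>U. \<phi> v \<in> acarrier A) \<longrightarrow>
      peval A \<phi> p = azero" if "U \<subseteq> pvars p" for U
  proof -
    have "finite U" using that multilinear_pvars_finite[OF ml] finite_subset by blast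
    then show ?thesis using that
    proof (induction U rule: finite_induct)
      case empty
      then show ?case using basis by simp
    next
      case (insert u U)
      show ?case
      proof (intro allI impI)
        fix \<phi> assume outside: "\<forall>v\<in>pvars p - insert u U. \<phi> v \<in> basis_set q n e d js"
          and inside: "\<forall>v\<in>insert u U. \<phi> v \<in> acarrier A"
        have u: "u \<in> pvars p" using insert by auto
        define Z where "Z = {x. peval A (\<phi>(u := x)) p = azero}"
        have "azero \<in> Z" unfolding Z_def by (simp add: peval_multilinear_azero[OF ml u])
        moreover have "aadd x y \<in> Z" if "x \<in> Z" "y \<in> Z" for x y
          using that peval_upd_linear(1)[OF ml u] by (simp add: Z_def aadd_def azero_def)
        moreover have "ascale c x \<in> Z" if "x \<in> Z" for c x
          using that peval_upd_linear(2)[OF ml u] by (simp add: Z_def ascale_def azero_def)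
        moreover have "basis_set q n e d js \<subseteq> Z"
          using insert.IH insert.prems insert.hyps(2) outside inside by (auto simp: Z_def)
        ultimately have "acarrier A \<subseteq> Z" by (rule WM_carrier_subset_subspace[OF WM])
        then show "peval A \<phi> p = azero" using inside by (auto simp: Z_def)
      qed
    qed
  qed
  then show ?thesis unfolding is_identity_def by auto
qed

lemma peval_alternating_eq_azero:
  fixes p :: "('f::field_char_0) ncpoly"
  assumes alt: "\<forall>w. p (map (Transposition.transpose a b) w) = - p w" and "\<phi> a = \<phi> b"
    and "finite (psupp p)"
  shows "peval A \<phi> p = azero"
proof
  fix t
  let ?\<tau> = "Transposition.transpose a b"
  let ?S = "psupp p"
  let ?f = "\<lambda>w. p w * aprod A (map \<phi> w) t"
  have inv: "map ?\<tau> (map ?\<tau> w) = w" for w by (simp add: map_idI)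
  have "\<phi> \<circ> ?\<tau> = \<phi>" using assms(2) by (auto simp: fun_eq_iff transpose_def)
  then have f: "?f (map ?\<tau> w) = - ?f w" for w by (simp add: alt)
  have inj: "inj_on (map ?\<tau>) ?S" by (metis inj_onI inv)
  have "map ?\<tau> ` ?S = ?S"
    using alt inv by (auto simp: psupp_def image_iff) (metis neg_equal_0_iff_equal inv)
  then have "sum ?f ?S = sum (?f \<circ> map ?\<tau>) ?S" using sum.reindex[OF inj, of ?f] by simp
  also have "\<dots> = sum (\<lambda>w. - ?f w) ?S" by (intro sum.cong refl) (simp only: comp_apply f)
  also have "\<dots> = - sum ?f ?S" by (simp add: sum_negf)
  finally have "sum ?f ?S = 0" by simp
  then show "peval A \<phi> p t = azero t" by (simp add: peval_def psupp_def azero_def)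
qed

section \<open>Identities of direct sums\<close>

definition dcomb :: "nat \<Rightarrow> ('f::field) vec \<Rightarrow> 'f vec \<Rightarrow> 'f vec" where
  "dcomb a x y = (\<lambda>k. if k < a then x k else y (k - a))"

definition shiftv :: "nat \<Rightarrow> ('f::field) vec \<Rightarrow> 'f vec" where
  "shiftv a x = (\<lambda>k. x (k + a))"

definition restrv :: "nat \<Rightarrow> ('f::field) vec \<Rightarrow> 'f vec" where
  "restrv a x = (\<lambda>k. if k < a then x k else 0)"

lemma amul_cong_low:
  assumes "\<forall>i<adim A. x i = x' i" "\<forall>j<adim A. y j = y' j"
  shows "amul A x y = amul A x' y'"
  unfolding amul_def fun_eq_iff using assms by (auto intro!: sum.cong)

lemma sc_alg_dsum2:
  "sc (alg_dsum2 A B) i j k = (if i < adim A \<and> j < adim A \<and> k < adim A then sc A i j k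
     else if adim A \<le> i \<and> adim A \<le> j \<and> adim A \<le> k
     then sc B (i - adim A) (j - adim A) (k - adim A) else 0)"
  by (simp add: alg_dsum2_def)

lemma amul_dsum2_low:
  assumes "k < adim A"
  shows "amul (alg_dsum2 A B) x y k = amul A x y k"
proof -
  let ?a = "adim A" and ?D = "alg_dsum2 A B"
  have "amul ?D x y k = (\<Sum>i<?a + adim B. \<Sum>j<?a + adim B. x i * y j * sc ?D i j k)"
    using assms by (simp add: amul_def alg_dsum2_def)
  also have "\<dots> = (\<Sum>i<?a. \<Sum>j<?a + adim B. x i * y j * sc ?D i j k)"
    by (rule sum.mono_neutral_right) (use assms in \<open>auto simp: sc_alg_dsum2\<close>)
  also have "\<dots> = (\<Sum>i<?a. \<Sum>j<?a. x i * y j * sc ?D i j k)"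
    by (rule sum.cong[OF refl], rule sum.mono_neutral_right) (use assms in \<open>auto simp: sc_alg_dsum2\<close>)
  also have "\<dots> = amul A x y k"
    using assms by (auto simp: amul_def sc_alg_dsum2 intro!: sum.cong)
  finally show ?thesis .
qed

lemma amul_dsum2_high:
  assumes "adim A \<le> k"
  shows "amul (alg_dsum2 A B) x y k = amul B (shiftv (adim A) x) (shiftv (adim A) y) (k - adim A)"
proof (cases "k < adim A + adim B")
  case True
  let ?a = "adim A" and ?b = "adim B" and ?D = "alg_dsum2 A B"
  have "amul ?D x y k = (\<Sum>i<?a + ?b. \<Sum>j<?a + ?b. x i * y j * sc ?D i j k)"
    using True by (simp add: amul_def alg_dsum2_def)
  also have "\<dots> = (\<Sum>i\<in>{?a..<?a + ?b}. \<Sum>j<?a + ?b. x i * y j * sc ?D i j k)"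
    by (rule sum.mono_neutral_right) (use assms in \<open>auto simp: sc_alg_dsum2\<close>)
  also have "\<dots> = (\<Sum>i\<in>{?a..<?a + ?b}. \<Sum>j\<in>{?a..<?a + ?b}. x i * y j * sc ?D i j k)"
    by (rule sum.cong[OF refl], rule sum.mono_neutral_right) (use assms in \<open>auto simp: sc_alg_dsum2\<close>)
  also have "\<dots> = (\<Sum>i\<in>{0 + ?a..<?b + ?a}. \<Sum>j\<in>{0 + ?a..<?b + ?a}. x i * y j * sc B (i - ?a) (j - ?a) (k - ?a))"
    using assms by (auto simp: sc_alg_dsum2 add.commute intro!: sum.cong)
  also have "\<dots> = amul B (shiftv ?a x) (shiftv ?a y) (k - ?a)"
    unfolding sum.shift_bounds_nat_ivl using True assms by (simp add: amul_def shiftv_def atLeast0LessThan)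
  finally show ?thesis .
next
  case False
  then show ?thesis by (simp add: amul_def alg_dsum2_def)
qed

lemma amul_dsum2:
  "amul (alg_dsum2 A B) x y = dcomb (adim A) (amul A x y) (amul B (shiftv (adim A) x) (shiftv (adim A) y))"
  by (simp add: dcomb_def fun_eq_iff amul_dsum2_low amul_dsum2_high)

lemma aprod_dsum2:
  "aprod (alg_dsum2 A B) (map \<phi> w) =
     dcomb (adim A) (aprod A (map \<phi> w)) (aprod B (map (shiftv (adim A) \<circ> \<phi>) w))"
proof (induction w rule: induct_list012)
  case 1
  then show ?case by (simp add: dcomb_def azero_def fun_eq_iff)
next
  case (2 x)
  then show ?case by (simp add: dcomb_def shiftv_def fun_eq_iff)
next
  case (3 x y zs)
  let ?a = "adim A" and ?P = "aprod (alg_dsum2 A B) (map \<phi> (y # zs))"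
  have "amul A (\<phi> x) ?P = amul A (\<phi> x) (aprod A (map \<phi> (y # zs)))"
  proof (rule amul_cong_low)
    show "\<forall>j<?a. ?P j = aprod A (map \<phi> (y # zs)) j" unfolding 3(2) dcomb_def by simp
  qed simp
  moreover have "shiftv ?a ?P = aprod B (map (shiftv ?a \<circ> \<phi>) (y # zs))"
    by (simp only: 3(2)) (simp add: shiftv_def dcomb_def comp_def)
  ultimately show ?case by (simp add: amul_dsum2 comp_def)
qed

lemma aprod_restrv_low:
  "k < adim A \<Longrightarrow> aprod A (map \<phi> w) k = aprod A (map (restrv (adim A) \<circ> \<phi>) w) k"
proof (induction w arbitrary: k rule: induct_list012)
  case (3 x y zs)
  have "amul A (\<phi> x) (aprod A (map \<phi> (y # zs))) =
      amul A (restrv (adim A) (\<phi> x)) (aprod A (map (restrv (adim A) \<circ> \<phi>) (y # zs)))"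
  proof (rule amul_cong_low)
    show "\<forall>j<adim A. aprod A (map \<phi> (y # zs)) j = aprod A (map (restrv (adim A) \<circ> \<phi>) (y # zs)) j"
      using 3(2) by blast
  qed (simp add: restrv_def)
  then show ?case by (simp add: comp_def)
qed (simp_all add: restrv_def)

lemma is_identity_dsum2:
  fixes p :: "('f::field) ncpoly"
  assumes "is_identity A p" "is_identity B p" "finite (psupp p)"
  shows "is_identity (alg_dsum2 A B) p"
  unfolding is_identity_def
proof (intro allI impI)
  fix \<phi> :: "nat \<Rightarrow> 'f vec" assume \<phi>: "\<forall>x. \<phi> x \<in> acarrier (alg_dsum2 A B)"
  let ?a = "adim A"
  have "\<forall>x. (shiftv ?a \<circ> \<phi>) x \<in> acarrier B"
    using \<phi> by (auto simp: acarrier_def shiftv_def alg_dsum2_def)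
  then have high: "peval B (shiftv ?a \<circ> \<phi>) p = azero" using assms(2) unfolding is_identity_def by blast
  have "\<forall>x. (restrv ?a \<circ> \<phi>) x \<in> acarrier A" by (auto simp: acarrier_def restrv_def)
  then have "peval A (restrv ?a \<circ> \<phi>) p = azero" using assms(1) unfolding is_identity_def by blast
  moreover have "peval A \<phi> p k = peval A (restrv ?a \<circ> \<phi>) p k" if "k < ?a" for k
    unfolding peval_def
    by (rule sum.cong[OF refl], rule arg_cong[where f="\<lambda>z. _ * z"], rule aprod_restrv_low[OF that])
  ultimately have low: "peval A \<phi> p k = 0" if "k < ?a" for k
    using that by (simp add: azero_def)
  have "peval (alg_dsum2 A B) \<phi> p = dcomb ?a (peval A \<phi> p) (peval B (shiftv ?a \<circ> \<phi>) p)"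
    using assms(3) unfolding peval_def aprod_dsum2 fun_eq_iff dcomb_def by auto
  then show "peval (alg_dsum2 A B) \<phi> p = azero"
    using low high by (auto simp: dcomb_def azero_def fun_eq_iff)
qed

lemma is_identity_alg_dsum_Nil:
  fixes p :: "('f::field) ncpoly"
  shows "is_identity (alg_dsum []) p"
  unfolding is_identity_def
proof (intro allI impI)
  fix \<phi> :: "nat \<Rightarrow> 'f vec" assume "\<forall>x. \<phi> x \<in> acarrier (alg_dsum [])"
  then have "\<phi> x = azero" for x by (auto simp: acarrier_def azero_def fun_eq_iff)
  then have "aprod (alg_dsum []) (map \<phi> w) = azero" for w
    by (cases w) (auto intro: aprod_azero)
  then show "peval (alg_dsum []) \<phi> p = azero"
    by (simp add: peval_def azero_def fun_eq_iff)
qed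

lemma is_identity_alg_dsum:
  assumes "\<forall>B\<in>set Bs. is_identity B p" "finite (psupp p)"
  shows "is_identity (alg_dsum Bs) p"
  using assms(1)
proof (induction Bs)
  case Nil
  show ?case by (rule is_identity_alg_dsum_Nil)
next
  case (Cons B Bs)
  then show ?case using is_identity_dsum2[OF _ _ assms(2)] by simp
qed

lemma pdims_length: "length (pdims q n) = q"
  by (simp add: pdims_def)

lemma pdims_nth: "i < q \<Longrightarrow> pdims q n ! i = n i ^ 2"
  by (simp add: pdims_def)

lemma covers_pdims_if_inj:
  assumes c: "\<forall>i<q. c i < qB"
    and inj: "inj_on h (SIGMA i:{..<q}. {..<n i ^ 2})"
    and into: "\<forall>i<q. \<forall>t<n i ^ 2. \<exists>k<nB (c i). \<exists>l<nB (c i). h (i, t) = eB (c i) k l"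
  shows "covers (pdims qB nB) (pdims q n)"
  unfolding covers_def
proof (intro exI[of _ c] conjI allI impI)
  fix i assume "i < length (pdims q n)"
  then show "c i < length (pdims qB nB)" using c by (simp add: pdims_length)
next
  fix j assume "j < length (pdims qB nB)"
  then have j: "j < qB" by (simp add: pdims_length)
  define S where "S = (SIGMA i:{i. i < q \<and> c i = j}. {..<n i ^ 2})"
  have "h ` S \<subseteq> (\<lambda>(k, l). eB j k l) ` ({..<nB j} \<times> {..<nB j})"
  proof
    fix x assume "x \<in> h ` S"
    then obtain i t where it: "i < q" "c i = j" "t < n i ^ 2" "x = h (i, t)" by (auto simp: S_def)
    have "\<exists>k<nB (c i). \<exists>l<nB (c i). h (i, t) = eB (c i) k l" using into it(1,3) by blast
    then obtain k l where "k < nB (c i)" "l < nB (c i)" "h (i, t) = eB (c i) k l" by blast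
    then show "x \<in> (\<lambda>(k, l). eB j k l) ` ({..<nB j} \<times> {..<nB j})"
      using it(2,4) by (intro image_eqI[of _ _ "(k, l)"]) auto
  qed
  then have "card (h ` S) \<le> card ((\<lambda>(k, l). eB j k l) ` ({..<nB j} \<times> {..<nB j}))"
    by (rule card_mono[rotated]) simp
  also have "\<dots> \<le> nB j ^ 2"
    using card_image_le[of "{..<nB j} \<times> {..<nB j}" "\<lambda>(k, l). eB j k l"] by (simp add: power2_eq_square)
  also have "card (h ` S) = card S"
    by (rule card_image, rule inj_on_subset[OF inj]) (auto simp: S_def)
  finally have "(\<Sum>i | i < q \<and> c i = j. n i ^ 2) \<le> nB j ^ 2"
    by (simp add: S_def)
  then show "(\<Sum>i | i < length (pdims q n) \<and> c i = j. pdims q n ! i) \<le> pdims qB nB ! j"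
    using j by (simp add: pdims_length pdims_nth)
qed

section \<open>The polynomial \<open>f\<^sub>A\<close>\<close>

locale alternating_construction =
  fixes A :: "('f::field_char_0) alg" and q :: nat and n :: "nat \<Rightarrow> nat"
    and e :: "nat \<Rightarrow> nat \<Rightarrow> nat \<Rightarrow> 'f vec" and d :: nat and js :: "nat \<Rightarrow> 'f vec"
    and f0 :: "'f ncpoly" and \<phi>0 :: "nat \<Rightarrow> 'f vec" and z kk ll :: "nat \<Rightarrow> nat" and R :: nat
  assumes alg: "is_alg A" and WM: "is_WM A q n e d js" and ml: "multilinear f0"
    and \<phi>0_carrier: "\<forall>v\<in>pvars f0. \<phi>0 v \<in> acarrier A" and \<phi>0_nonzero: "peval A \<phi>0 f0 \<noteq> azero"
    and z: "\<forall>i<q. z i \<in> pvars f0 \<and> kk i < n i \<and> ll i < n i \<and> \<phi>0 (z i) = e i (kk i) (ll i)"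
begin

lemma z_pvars: "i < q \<Longrightarrow> z i \<in> pvars f0"
  and kk_less: "i < q \<Longrightarrow> kk i < n i"
  and ll_less: "i < q \<Longrightarrow> ll i < n i"
  using z by blast+

lemma z_inj: "inj_on z {..<q}"
proof (rule inj_onI)
  fix i j assume "i \<in> {..<q}" "j \<in> {..<q}" "z i = z j"
  then have "i < q" "j < q" "e i (kk i) (ll i) = e j (kk j) (ll j)" using z by (metis lessThan_iff)+
  then show "i = j" using WM_e_eq_imp_same_comp[OF WM] kk_less ll_less by blast
qed

lemma f0_Nil: "f0 [] = 0"
  using multilinear_Nil[OF ml] .

lemma f0_finite: "finite (psupp f0)"
  using multilinear_finite[OF ml] .

lemma f0_word: "w \<in> psupp f0 \<Longrightarrow> distinct w \<and> set w = pvars f0"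
  using multilinear_word[OF ml] by (simp add: psupp_def)

definition var0 :: nat where
  "var0 = Suc (Max (insert 0 (pvars f0)))"

lemma pvars_less_var0: "v \<in> pvars f0 \<Longrightarrow> v < var0"
  using multilinear_pvars_finite[OF ml] by (simp add: var0_def le_imp_less_Suc)

text \<open>\<open>Y\<^sub>b\<^sub>i\<^sub>t\<close>, \<open>X\<^sub>b\<^sub>i\<^sub>t\<close>, \<open>Z\<^sub>b\<^sub>i\<^sub>t\<close> are \<open>fvar b i t 0\<close>, \<open>fvar b i t 1\<close>, \<open>fvar b i t 2\<close>.\<close>

definition fvar :: "nat \<Rightarrow> nat \<Rightarrow> nat \<Rightarrow> nat \<Rightarrow> nat" where
  "fvar b i t r = var0 + 3 * prod_encode (b, prod_encode (i, t)) + r"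

definition block :: "nat \<Rightarrow> nat" where
  "block v = fst (prod_decode ((v - var0) div 3))"

lemma fvar_eq_iff:
  assumes "r < 3" "r' < 3"
  shows "fvar b i t r = fvar b' i' t' r' \<longleftrightarrow> b = b' \<and> i = i' \<and> t = t' \<and> r = r'"
proof -
  have "var0 + 3 * c + r = var0 + 3 * c' + r' \<longleftrightarrow> c = c' \<and> r = r'" for c c'
    using assms by presburger
  then show ?thesis unfolding fvar_def by (auto simp: prod_encode_eq)
qed

lemma fvar_not_pvars: "fvar b i t r \<notin> pvars f0"
  using pvars_less_var0 by (fastforce simp: fvar_def)

lemma block_fvar: "r < 3 \<Longrightarrow> block (fvar b i t r) = b"
  by (simp add: block_def fvar_def)

definition segment :: "nat \<Rightarrow> nat \<Rightarrow> nat list" where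
  "segment b i = concat (map (\<lambda>t. [fvar b i t 0, fvar b i t 1, fvar b i t 2]) [0..<n i ^ 2])"

definition qword :: "nat \<Rightarrow> nat list" where
  "qword i = concat (map (\<lambda>b. segment b i) [0..<R])"

definition subst_word :: "nat \<Rightarrow> nat list" where
  "subst_word v = v # concat (map (\<lambda>i. if z i = v then qword i else []) [0..<q])"

definition expand :: "nat list \<Rightarrow> nat list" where
  "expand w = concat (map subst_word w)"

definition g :: "'f ncpoly" where
  "g = psubst (\<lambda>v. pmono (subst_word v)) f0"

lemma set_segment: "set (segment b i) = {fvar b i t r | t r. t < n i ^ 2 \<and> r < 3}"
proof -
  have lt3: "r < 3 \<longleftrightarrow> r = 0 \<or> r = 1 \<or> r = 2" for r :: nat by auto
  show ?thesis unfolding segment_def lt3 by auto blast+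
qed

lemma set_qword: "set (qword i) = {fvar b i t r | b t r. b < R \<and> t < n i ^ 2 \<and> r < 3}"
  unfolding qword_def set_concat set_map by (auto simp: set_segment) force+

lemma segment_split:
  assumes "t < n i ^ 2"
  obtains pre post where "segment b i = pre @ [fvar b i t 0, fvar b i t 1, fvar b i t 2] @ post"
proof -
  have "[0..<n i ^ 2] = [0..<t] @ t # [Suc t..<n i ^ 2]"
    using assms by (metis upt_add_eq_append upt_conv_Cons le0 le_add_diff_inverse less_imp_le_nat)
  then show thesis using that by (simp add: segment_def)
qed

lemma qword_split:
  assumes "b < R"
  obtains pre post where "qword i = pre @ segment b i @ post"
proof -
  have "[0..<R] = [0..<b] @ b # [Suc b..<R]"
    using assms by (metis upt_add_eq_append upt_conv_Cons le0 le_add_diff_inverse less_imp_le_nat)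
  then show thesis using that by (simp add: qword_def)
qed

lemma distinct_segment: "distinct (segment b i)"
  unfolding segment_def
  by (rule distinct_concat) (auto simp: distinct_map inj_on_def fvar_eq_iff)

lemma distinct_qword: "i < q \<Longrightarrow> distinct (qword i)"
  unfolding qword_def
proof (rule distinct_concat)
  assume i: "i < q"
  have mem: "fvar b i 0 0 \<in> set (segment b i)" for b
    unfolding set_segment using WM_pos[OF WM i] by (intro CollectI exI[of _ 0]) simp
  have "inj_on (\<lambda>b. segment b i) {0..<R}"
  proof (rule inj_onI)
    fix b b' assume "segment b i = segment b' i"
    then have "fvar b i 0 0 \<in> set (segment b' i)" using mem[of b] by simp
    then show "b = b'" by (auto simp: set_segment fvar_eq_iff)
  qed
  then show "distinct (map (\<lambda>b. segment b i) [0..<R])" by (simp add: distinct_map)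
qed (auto simp: distinct_segment set_segment fvar_eq_iff)

lemma qword_ge_var0: "x \<in> set (qword i) \<Longrightarrow> var0 \<le> x"
  by (auto simp: set_qword fvar_def)

lemma qword_disjoint: "i \<noteq> i' \<Longrightarrow> set (qword i) \<inter> set (qword i') = {}"
  by (auto simp: set_qword fvar_eq_iff)

lemma subst_word_z: "i < q \<Longrightarrow> subst_word (z i) = z i # qword i"
proof -
  assume i: "i < q"
  have eq: "map (\<lambda>i'. if z i' = z i then qword i' else []) [0..<q] =
      map (\<lambda>i'. if i' = i then qword i else []) [0..<q]"
    using z_inj i by (auto simp: inj_on_def)
  have "concat (map (\<lambda>i'. if i' = i then qword i else []) [0..<m]) = (if i < m then qword i else [])" for m
    by (induction m) auto
  then show ?thesis unfolding subst_word_def eq using i by simp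
qed

lemma subst_word_other: "v \<notin> z ` {..<q} \<Longrightarrow> subst_word v = [v]"
  unfolding subst_word_def by auto

lemma subst_word_ne: "subst_word v \<noteq> []"
  by (simp add: subst_word_def)

lemma set_subst_word: "set (subst_word v) = insert v (\<Union>i\<in>{i. i < q \<and> z i = v}. set (qword i))"
  unfolding subst_word_def by (auto split: if_splits)

lemma distinct_subst_word: "v < var0 \<Longrightarrow> distinct (subst_word v)"
proof (cases "v \<in> z ` {..<q}")
  case True
  then obtain i where "i < q" "v = z i" by blast
  moreover assume "v < var0"
  ultimately show ?thesis using subst_word_z distinct_qword qword_ge_var0 by fastforce
qed (simp add: subst_word_other)

lemma filter_expand: "set w \<subseteq> {..<var0} \<Longrightarrow> filter (\<lambda>x. x < var0) (expand w) = w"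
proof (induction w)
  case Nil
  then show ?case by (simp add: expand_def)
next
  case (Cons v w)
  have "filter (\<lambda>x. x < var0) (subst_word v) = [v]"
    using Cons.prems qword_ge_var0 by (force simp: subst_word_def filter_empty_conv)
  then show ?case using Cons by (simp add: expand_def)
qed

lemma expand_inj_on_f0: "inj_on expand (psupp f0)"
proof (rule inj_onI)
  fix w w' assume "w \<in> psupp f0" "w' \<in> psupp f0" "expand w = expand w'"
  then show "w = w'" using filter_expand f0_word pvars_less_var0 by (metis lessThan_iff subsetI)
qed

lemma set_expand: "w0 \<in> psupp f0 \<Longrightarrow> set (expand w0) = pvars f0 \<union> (\<Union>i<q. set (qword i))"
  using f0_word[of w0] z_pvars by (auto simp: expand_def set_subst_word)

lemma distinct_expand: "w0 \<in> psupp f0 \<Longrightarrow> distinct (expand w0)"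
  unfolding expand_def
proof (rule distinct_concat)
  assume w0: "w0 \<in> psupp f0"
  then have lt: "\<And>v. v \<in> set w0 \<Longrightarrow> v < var0" using f0_word pvars_less_var0 by blast
  have "inj_on subst_word (set w0)" by (rule inj_onI) (simp add: subst_word_def)
  then show "distinct (map subst_word w0)" using f0_word[OF w0] by (simp add: distinct_map)
  show "\<And>ys. ys \<in> set (map subst_word w0) \<Longrightarrow> distinct ys" using distinct_subst_word lt by auto
  have "set (subst_word v) \<inter> set (subst_word v') = {}" if v: "v < var0" "v' < var0" "v \<noteq> v'" for v v'
  proof (rule ccontr)
    assume "set (subst_word v) \<inter> set (subst_word v') \<noteq> {}"
    then obtain x where x: "x \<in> set (subst_word v)" "x \<in> set (subst_word v')" by blast
    show False
    proof (cases "x < var0")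
      case True
      then have "x = v" "x = v'" using x qword_ge_var0 unfolding set_subst_word by (auto simp: not_le[symmetric])
      with v show False by simp
    next
      case False
      then obtain i i' where "x \<in> set (qword i)" "z i = v" "x \<in> set (qword i')" "z i' = v'"
        using x v unfolding set_subst_word by auto
      then show False using qword_disjoint[of i i'] v(3) by auto
    qed
  qed
  then show "\<And>ys zs. ys \<in> set (map subst_word w0) \<Longrightarrow> zs \<in> set (map subst_word w0) \<Longrightarrow> ys \<noteq> zs \<Longrightarrow>
      set ys \<inter> set zs = {}"
    using lt by auto
qed

lemma g_supp: "g v \<noteq> 0 \<Longrightarrow> \<exists>w0\<in>psupp f0. v = expand w0"
  using psubst_pmono_outside_image[of subst_word f0 v] subst_word_ne f0_Nil
  by (force simp: g_def expand_def)

lemma g_Nil: "g [] = 0"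
  using g_supp f0_Nil by (force simp: expand_def psupp_def subst_word_ne)

lemma g_finite: "finite (psupp g)"
proof -
  have "psupp g \<subseteq> expand ` psupp f0" using g_supp by (auto simp: psupp_def)
  then show ?thesis using f0_finite finite_subset by blast
qed

lemma g_in_Tideal: "g \<in> Tideal f0"
  unfolding g_def by (rule Tideal.subst[OF Tideal.gen]) (simp add: subst_word_ne pmono_ncpoly)

definition alt_vars :: "nat set" where
  "alt_vars = {fvar b i t 1 | b i t. b < R \<and> i < q \<and> t < n i ^ 2}"

definition alt_block :: "nat \<Rightarrow> nat set" where
  "alt_block b = {fvar b i t 1 | i t. i < q \<and> t < n i ^ 2}"

definition block_vars :: "nat \<Rightarrow> nat set" where
  "block_vars b = {fvar b i t r | i t r. i < q \<and> t < n i ^ 2 \<and> r < 3}"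

definition perms :: "(nat \<Rightarrow> nat) set" where
  "perms = {\<sigma>. \<sigma> permutes alt_vars \<and> (\<forall>x\<in>alt_vars. block (\<sigma> x) = block x)}"

definition fA :: "'f ncpoly" where
  "fA = (\<lambda>w. \<Sum>\<sigma>\<in>perms. of_int (sign \<sigma>) * g (map \<sigma> w))"

definition all_vars :: "nat set" where
  "all_vars = pvars f0 \<union> (\<Union>i<q. set (qword i))"

lemma alt_vars_finite: "finite alt_vars"
proof -
  have "alt_vars = (\<lambda>(b, i, t). fvar b i t 1) ` ({..<R} \<times> (SIGMA i:{..<q}. {..<n i ^ 2}))"
    unfolding alt_vars_def by force
  then show ?thesis by simp
qed

lemma perms_finite: "finite perms"
  using finite_subset[OF _ finite_permutations[OF alt_vars_finite]] by (auto simp: perms_def)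

lemma id_in_perms: "id \<in> perms"
  by (simp add: perms_def permutes_id)

lemma perms_permutes: "\<sigma> \<in> perms \<Longrightarrow> \<sigma> permutes alt_vars"
  by (simp add: perms_def)

lemma perms_bij: "\<sigma> \<in> perms \<Longrightarrow> bij \<sigma>"
  using perms_permutes permutes_bij by blast

lemma perms_permutation: "\<sigma> \<in> perms \<Longrightarrow> permutation \<sigma>"
  using perms_permutes alt_vars_finite permutation_permutes by blast

lemma alt_vars_subset_all_vars: "alt_vars \<subseteq> all_vars"
  by (force simp: alt_vars_def all_vars_def set_qword)

lemma alt_block_subset_alt_vars: "b < R \<Longrightarrow> alt_block b \<subseteq> alt_vars"
  by (force simp: alt_block_def alt_vars_def)

lemma alt_block_subset_block_vars: "alt_block b \<subseteq> block_vars b"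
  by (force simp: alt_block_def block_vars_def)

lemma block_vars_subset_all_vars: "b < R \<Longrightarrow> block_vars b \<subseteq> all_vars"
  by (force simp: block_vars_def all_vars_def set_qword)

lemma perms_inv_alt_vars:
  assumes "\<sigma> \<in> perms" "x \<in> alt_vars"
  shows "inv \<sigma> x \<in> alt_vars \<and> block (inv \<sigma> x) = block x"
proof -
  have x: "inv \<sigma> x \<in> alt_vars" using permutes_inv[OF perms_permutes[OF assms(1)]] assms(2)
    by (simp add: permutes_in_image)
  have "\<sigma> (inv \<sigma> x) = x" using permutes_inverses[OF perms_permutes[OF assms(1)]] by simp
  moreover have "block (\<sigma> (inv \<sigma> x)) = block (inv \<sigma> x)" using assms(1) x by (simp add: perms_def)
  ultimately show ?thesis using x by simp
qed

lemma perms_inv_other: "\<sigma> \<in> perms \<Longrightarrow> x \<notin> alt_vars \<Longrightarrow> inv \<sigma> x = x"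
  using permutes_not_in[OF permutes_inv[OF perms_permutes]] by blast

lemma block_vars_block: "v \<in> block_vars b \<Longrightarrow> block v = b"
  by (auto simp: block_vars_def block_fvar)

lemma fvar_in_block_vars: "i < q \<Longrightarrow> t < n i ^ 2 \<Longrightarrow> r < 3 \<Longrightarrow> fvar b i t r \<in> block_vars b"
  unfolding block_vars_def by blast

lemma fvar_in_alt_block: "i < q \<Longrightarrow> t < n i ^ 2 \<Longrightarrow> fvar b i t 1 \<in> alt_block b"
  unfolding alt_block_def by blast

lemma perms_inv_alt_vars_block:
  assumes "\<sigma> \<in> perms" "x \<in> alt_vars"
  obtains i t where "inv \<sigma> x = fvar (block x) i t 1" "i < q" "t < n i ^ 2"
proof -
  obtain b i t where "inv \<sigma> x = fvar b i t 1" "i < q" "t < n i ^ 2"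
    using perms_inv_alt_vars[OF assms] unfolding alt_vars_def by blast
  moreover have "b = block x" using perms_inv_alt_vars[OF assms] calculation(1) by (simp add: block_fvar)
  ultimately show thesis using that by blast
qed

lemma perms_inv_block_vars:
  assumes "\<sigma> \<in> perms" "v \<in> block_vars b"
  shows "inv \<sigma> v \<in> block_vars b"
proof (cases "v \<in> alt_vars")
  case True
  then obtain i t where "inv \<sigma> v = fvar (block v) i t 1" "i < q" "t < n i ^ 2"
    using perms_inv_alt_vars_block[OF assms(1)] by blast
  then show ?thesis using block_vars_block[OF assms(2)] fvar_in_block_vars by simp
next
  case False
  then show ?thesis using perms_inv_other[OF assms(1)] assms(2) by simp
qed

lemma perms_inv_alt_block:
  assumes "\<sigma> \<in> perms" "b < R" "v \<in> alt_block b"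
  shows "inv \<sigma> v \<in> alt_block b"
proof -
  have "v \<in> alt_vars" using assms(2,3) alt_block_subset_alt_vars by blast
  then obtain i t where "inv \<sigma> v = fvar (block v) i t 1" "i < q" "t < n i ^ 2"
    using perms_inv_alt_vars_block[OF assms(1)] by blast
  moreover have "block v = b" using assms(3) by (auto simp: alt_block_def block_fvar)
  ultimately show ?thesis using fvar_in_alt_block by simp
qed

lemma perms_inv_all_vars: "\<sigma> \<in> perms \<Longrightarrow> inv \<sigma> ` all_vars = all_vars"
proof -
  assume "\<sigma> \<in> perms"
  then have p: "inv \<sigma> permutes alt_vars" using permutes_inv perms_permutes by blast
  have "inv \<sigma> ` all_vars = inv \<sigma> ` alt_vars \<union> inv \<sigma> ` (all_vars - alt_vars)"
    using alt_vars_subset_all_vars by blast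
  also have "\<dots> = all_vars"
    using permutes_image[OF p] permutes_not_in[OF p] alt_vars_subset_all_vars by force
  finally show ?thesis .
qed

lemma fA_supp: "fA w \<noteq> 0 \<Longrightarrow> \<exists>\<sigma>\<in>perms. \<exists>w0\<in>psupp f0. w = map (inv \<sigma>) (expand w0)"
proof -
  assume "fA w \<noteq> 0"
  then obtain \<sigma> where \<sigma>: "\<sigma> \<in> perms" "g (map \<sigma> w) \<noteq> 0"
    unfolding fA_def by (metis (no_types, lifting) mult_zero_right sum.neutral)
  then obtain w0 where "w0 \<in> psupp f0" "map \<sigma> w = expand w0" using g_supp by blast
  moreover have "map (inv \<sigma>) (map \<sigma> w) = w"
    using perms_bij[OF \<sigma>(1)] by (simp add: map_idI bij_is_inj inv_f_f)
  ultimately show ?thesis using \<sigma> by metis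
qed

lemma fA_word: "fA w \<noteq> 0 \<Longrightarrow> distinct w \<and> set w = all_vars"
proof -
  assume "fA w \<noteq> 0"
  then obtain \<sigma> w0 where \<sigma>: "\<sigma> \<in> perms" "w0 \<in> psupp f0" "w = map (inv \<sigma>) (expand w0)"
    using fA_supp by blast
  have "inj (inv \<sigma>)" using perms_bij[OF \<sigma>(1)] bij_imp_bij_inv bij_is_inj by blast
  then have "inj_on (inv \<sigma>) (set (expand w0))" using inj_on_subset by blast
  then show ?thesis
    using \<sigma> distinct_expand set_expand perms_inv_all_vars by (simp add: distinct_map all_vars_def)
qed

lemma fA_finite: "finite (psupp fA)"
proof -
  have "psupp fA \<subseteq> (\<Union>\<sigma>\<in>perms. map (inv \<sigma>) ` expand ` psupp f0)"
    using fA_supp by (fastforce simp: psupp_def)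
  then show ?thesis using perms_finite f0_finite finite_subset by blast
qed

lemma fA_multilinear: "multilinear fA"
proof -
  have "fA [] = 0" by (simp add: fA_def g_Nil)
  then show ?thesis
    unfolding multilinear_def is_ncpoly_def using fA_finite fA_word by (auto simp: psupp_def)
qed

lemma pvars_fA_subset: "pvars fA \<subseteq> all_vars"
  using fA_word by (auto simp: pvars_def)

lemma fA_in_Tideal: "fA \<in> Tideal f0"
proof -
  have "psmult (of_int (sign \<sigma>)) (ren \<sigma> g) \<in> Tideal f0" if "\<sigma> \<in> perms" for \<sigma>
  proof -
    have "ren \<sigma> g = psubst (\<lambda>v. pmono [inv \<sigma> v]) g"
      by (rule ren_eq_psubst[OF perms_bij[OF that] g_Nil g_finite])
    also have "\<dots> \<in> Tideal f0"
      by (rule Tideal.subst[OF g_in_Tideal]) (simp add: pmono_ncpoly)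
    finally show ?thesis by (rule Tideal.smult)
  qed
  then have "(\<lambda>w. \<Sum>\<sigma>\<in>perms. psmult (of_int (sign \<sigma>)) (ren \<sigma> g) w) \<in> Tideal f0"
    using id_in_perms by (intro Tideal_sum[OF perms_finite]) auto
  then show ?thesis by (simp add: fA_def psmult_def ren_def)
qed

lemma fA_alternating:
  assumes "b < R" "a \<in> alt_block b" "a' \<in> alt_block b" "a \<noteq> a'"
  shows "fA (map (Transposition.transpose a a') w) = - fA w"
proof -
  let ?t = "Transposition.transpose a a'"
  have tau: "?t \<in> perms"
  proof -
    have a: "a \<in> alt_vars" "a' \<in> alt_vars" using assms alt_block_subset_alt_vars by auto
    have "block a = block a'" using assms(2,3) by (auto simp: alt_block_def block_fvar)
    then show ?thesis using a by (auto simp: perms_def permutes_swap_id transpose_def)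
  qed
  have closed: "\<sigma> \<circ> ?t \<in> perms" if "\<sigma> \<in> perms" for \<sigma>
    using that tau permutes_compose[OF perms_permutes[OF tau] perms_permutes[OF that]]
      permutes_in_image[OF perms_permutes[OF tau]]
    by (auto simp: perms_def)
  have "fA (map ?t w) = (\<Sum>\<sigma>\<in>perms. of_int (sign \<sigma>) * g (map (\<sigma> \<circ> ?t) w))"
    by (simp add: fA_def)
  also have "\<dots> = (\<Sum>\<rho>\<in>perms. of_int (sign (\<rho> \<circ> ?t)) * g (map \<rho> w))"
    by (rule sum.reindex_bij_witness[where i="\<lambda>\<rho>. \<rho> \<circ> ?t" and j="\<lambda>\<sigma>. \<sigma> \<circ> ?t"])
      (auto simp: closed o_assoc[symmetric])
  also have "\<dots> = (\<Sum>\<rho>\<in>perms. - (of_int (sign \<rho>) * g (map \<rho> w)))"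
    using sign_compose[OF perms_permutation perms_permutation[OF tau]] assms(4)
    by (intro sum.cong refl) (simp add: sign_swap_id)
  also have "\<dots> = - fA w" by (simp add: fA_def sum_negf)
  finally show ?thesis .
qed

subsection \<open>\<open>f\<^sub>A\<close> is not an identity of \<open>A\<close>\<close>

text \<open>The index \<open>t < n\<^sub>i\<^sup>2\<close> stands for the pair \<open>(r, s) = (t div n\<^sub>i, t mod n\<^sub>i)\<close>; the triple is
  \<open>e\<^sup>i\<^sub>l\<^sub>r, e\<^sup>i\<^sub>r\<^sub>s, e\<^sup>i\<^sub>s\<^sub>l\<close> with \<open>l = ll i\<close>, whose product \<open>e\<^sup>i\<^sub>l\<^sub>l\<close> fixes \<open>e\<^sup>i\<^sub>k\<^sub>l\<close> from the right.\<close>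

definition unit_triple :: "nat \<Rightarrow> nat \<Rightarrow> 'f vec list" where
  "unit_triple i t = [e i (ll i) (t div n i), e i (t div n i) (t mod n i), e i (t mod n i) (ll i)]"

definition psi :: "nat \<Rightarrow> 'f vec" where
  "psi v = (if v \<in> pvars f0 then \<phi>0 v
     else if var0 \<le> v then
       (case prod_decode (snd (prod_decode ((v - var0) div 3))) of (i, t) \<Rightarrow>
          if i < q \<and> t < n i ^ 2 then unit_triple i t ! ((v - var0) mod 3) else azero)
     else azero)"

lemma psi_fvar: "r < 3 \<Longrightarrow> i < q \<Longrightarrow> t < n i ^ 2 \<Longrightarrow> psi (fvar b i t r) = unit_triple i t ! r"
  using fvar_not_pvars by (simp add: psi_def fvar_def)

lemma div_mod_less:
  assumes "i < q" "t < n i ^ 2"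
  shows "t div n i < n i" "t mod n i < n i"
  using assms WM_pos[OF WM] by (simp_all add: power2_eq_square less_mult_imp_div_less)

lemma unit_triple_carrier: "i < q \<Longrightarrow> t < n i ^ 2 \<Longrightarrow> set (unit_triple i t) \<subseteq> acarrier A"
  using WM_e_carrier[OF WM] div_mod_less ll_less by (simp add: unit_triple_def)

lemma psi_carrier: "psi v \<in> acarrier A"
proof -
  have "unit_triple i t ! r \<in> acarrier A" if "i < q" "t < n i ^ 2" "r < 3" for i t r
  proof -
    have "r < length (unit_triple i t)" using that(3) by (simp add: unit_triple_def)
    then show ?thesis using nth_mem unit_triple_carrier[OF that(1,2)] by blast
  qed
  then show ?thesis using \<phi>0_carrier by (auto simp: psi_def split: prod.split)
qed

lemma aprod_psi_z_qword:
  assumes i: "i < q"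
  shows "aprod A (map psi (z i # qword i)) = e i (kk i) (ll i)"
proof -
  let ?a = "e i (kk i) (ll i)"
  have a: "?a \<in> acarrier A" using WM_e_carrier[OF WM i kk_less[OF i] ll_less[OF i]] .
  have triple: "aprod A (?a # unit_triple i t) = ?a" if "t < n i ^ 2" for t
    using WM_mult[OF WM] i kk_less[OF i] ll_less[OF i] div_mod_less[OF i that]
    by (simp add: unit_triple_def)
  have "map psi [fvar b i t 0, fvar b i t 1, fvar b i t 2] = unit_triple i t" if "t < n i ^ 2" for b t
    using psi_fvar[OF _ i that] by (simp add: unit_triple_def)
  then have "map psi (segment b i) = concat (map (unit_triple i) [0..<n i ^ 2])" for b
    unfolding segment_def map_concat map_map by (intro arg_cong[where f = concat] map_cong refl) auto
  then have segment: "aprod A (?a # map psi (segment b i)) = ?a" for b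
    using aprod_absorb_concat[OF alg a] triple unit_triple_carrier[OF i] by simp
  have "map psi (qword i) = concat (map (\<lambda>b. map psi (segment b i)) [0..<R])"
    by (simp add: qword_def map_concat comp_def)
  then have "aprod A (?a # map psi (qword i)) = ?a"
    using aprod_absorb_concat[OF alg a, of "map (\<lambda>b. map psi (segment b i)) [0..<R]"] segment psi_carrier
    by auto
  moreover have "psi (z i) = ?a" using z i by (simp add: psi_def)
  ultimately show ?thesis by simp
qed

lemma peval_g:
  assumes "\<forall>v. \<psi> v \<in> acarrier A"
  shows "peval A \<psi> g = peval A (\<lambda>v. aprod A (map \<psi> (subst_word v))) f0"
  unfolding g_def
  by (rule peval_psubst_pmono[OF alg assms])
    (use subst_word_ne f0_Nil f0_finite expand_inj_on_f0 in \<open>simp_all add: expand_def[abs_def]\<close>)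

lemma peval_subst_word_psi: "peval A (\<lambda>v. aprod A (map psi (subst_word v))) f0 = peval A \<phi>0 f0"
proof (rule peval_cong, intro ballI)
  fix v assume v: "v \<in> pvars f0"
  show "aprod A (map psi (subst_word v)) = \<phi>0 v"
  proof (cases "v \<in> z ` {..<q}")
    case True
    then obtain i where "i < q" "v = z i" by blast
    then show ?thesis using subst_word_z aprod_psi_z_qword z by simp
  next
    case False
    then show ?thesis using v by (simp add: subst_word_other psi_def)
  qed
qed

text \<open>A nontrivial \<open>\<sigma>\<close> moves some \<open>X\<^sub>b\<^sub>i\<^sub>t\<close>; then \<open>e\<^sup>i\<^sub>l\<^sub>r (\<psi> \<circ> \<sigma>\<^sup>-\<^sup>1)(X\<^sub>b\<^sub>i\<^sub>t) e\<^sup>i\<^sub>s\<^sub>l = 0\<close> kills the value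
  of \<open>z\<^sub>i Q\<^sub>i\<close>.\<close>

lemma aprod_subst_word_perm_azero:
  assumes \<sigma>: "\<sigma> \<in> perms" "\<sigma> \<noteq> id"
  obtains i where "i < q" "aprod A (map (psi \<circ> inv \<sigma>) (subst_word (z i))) = azero"
proof -
  let ?p = "psi \<circ> inv \<sigma>"
  obtain x where x: "\<sigma> x \<noteq> x" using \<sigma>(2) by (metis eq_id_iff)
  have xX: "x \<in> alt_vars" using x permutes_not_in[OF perms_permutes[OF \<sigma>(1)]] by blast
  define y where "y = \<sigma> x"
  have yX: "y \<in> alt_vars" using permutes_in_image[OF perms_permutes[OF \<sigma>(1)]] xX y_def by simp
  have iy: "inv \<sigma> y = x" using permutes_inverses[OF perms_permutes[OF \<sigma>(1)]] y_def by simp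
  obtain b i t where y: "y = fvar b i t 1" "b < R" "i < q" "t < n i ^ 2"
    using yX unfolding alt_vars_def by blast
  obtain b' i' t' where x': "x = fvar b' i' t' 1" "i' < q" "t' < n i' ^ 2"
    using xX unfolding alt_vars_def by blast
  have "block x = block y" using perms_inv_alt_vars[OF \<sigma>(1) yX] iy by simp
  then have "b' = b" using y x' block_fvar by simp
  then have ne_it: "(i', t') \<noteq> (i, t)" using x y x' y_def by auto
  have ne: "(i', t' div n i', t' mod n i') \<noteq> (i, t div n i, t mod n i)"
  proof
    assume "(i', t' div n i', t' mod n i') = (i, t div n i, t mod n i)"
    then have "i' = i" "t' div n i = t div n i" "t' mod n i = t mod n i" by auto
    then have "i' = i" "t' = t" by (metis div_mult_mod_eq)+
    with ne_it show False by simp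
  qed
  have other: "fvar b i t r \<notin> alt_vars" if "r \<noteq> 1" "r < 3" for r
    using that by (auto simp: alt_vars_def fvar_eq_iff)
  have "map ?p [fvar b i t 0, y, fvar b i t 2] =
      [e i (ll i) (t div n i), e i' (t' div n i') (t' mod n i'), e i (t mod n i) (ll i)]"
    using perms_inv_other[OF \<sigma>(1) other] iy psi_fvar y x' by (simp add: unit_triple_def)
  then have zero: "amul A (amul A (?p (fvar b i t 0)) (?p y)) (?p (fvar b i t 2)) = azero"
    using WM_sandwich_zero[OF WM y(3) ll_less[OF y(3)] div_mod_less[OF y(3,4)] ll_less[OF y(3)]
        x'(2) div_mod_less[OF x'(2,3)] ne] by simp
  obtain pre post where "qword i = pre @ segment b i @ post" using qword_split[OF y(2)] .
  moreover obtain pre' post' where "segment b i = pre' @ [fvar b i t 0, y, fvar b i t 2] @ post'"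
    using segment_split[OF y(4)] y(1) by metis
  ultimately have "map ?p (subst_word (z i)) =
      map ?p (z i # pre @ pre') @ ?p (fvar b i t 0) # ?p y # ?p (fvar b i t 2) # map ?p (post' @ post)"
    using subst_word_z[OF y(3)] by simp
  also have "aprod A \<dots> = azero"
    by (rule aprod_zero_triple[OF alg _ zero]) (use psi_carrier in auto)
  finally have "aprod A (map ?p (subst_word (z i))) = azero" .
  then show thesis using that y(3) by blast
qed

lemma peval_psi_fA: "peval A psi fA = peval A \<phi>0 f0"
proof -
  have fA_ren: "fA = (\<lambda>w. \<Sum>\<sigma>\<in>perms. of_int (sign \<sigma>) * ren \<sigma> g w)" by (simp add: fA_def ren_def)
  have "finite (psupp (ren \<sigma> g))" if "\<sigma> \<in> perms" for \<sigma>
    using finite_imageI[OF g_finite, of "map (inv \<sigma>)"] psupp_ren[OF perms_bij[OF that], of g] by simp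
  then have "peval A psi fA = (\<lambda>x. \<Sum>\<sigma>\<in>perms. of_int (sign \<sigma>) * peval A psi (ren \<sigma> g) x)"
    unfolding fA_ren by (intro peval_sum[OF perms_finite] ballI)
  also have "\<dots> = (\<lambda>x. \<Sum>\<sigma>\<in>perms. if \<sigma> = id then peval A \<phi>0 f0 x else 0)"
  proof (intro ext sum.cong refl)
    fix x \<sigma> assume \<sigma>: "\<sigma> \<in> perms"
    have "peval A psi (ren \<sigma> g) = peval A (\<lambda>v. aprod A (map (psi \<circ> inv \<sigma>) (subst_word v))) f0"
      unfolding peval_ren[OF perms_bij[OF \<sigma>]] by (rule peval_g) (simp add: psi_carrier)
    moreover have "peval A (\<lambda>v. aprod A (map (psi \<circ> inv \<sigma>) (subst_word v))) f0 = azero" if "\<sigma> \<noteq> id"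
      using aprod_subst_word_perm_azero[OF \<sigma> that] peval_multilinear_azero[OF ml z_pvars] by metis
    ultimately show "of_int (sign \<sigma>) * peval A psi (ren \<sigma> g) x = (if \<sigma> = id then peval A \<phi>0 f0 x else 0)"
      using peval_subst_word_psi by (auto simp: azero_def)
  qed
  also have "\<dots> = peval A \<phi>0 f0" using perms_finite id_in_perms by simp
  finally show ?thesis .
qed

lemma not_is_identity_fA: "\<not> is_identity A fA"
  unfolding is_identity_def using peval_psi_fA \<phi>0_nonzero psi_carrier by metis

lemma pvars_fA: "pvars fA = all_vars"
proof -
  have "fA \<noteq> (\<lambda>_. 0)" using peval_psi_fA \<phi>0_nonzero by (auto simp: peval_def azero_def)
  then obtain w where "fA w \<noteq> 0" by auto
  then show ?thesis using fA_word pvars_fA_subset by (auto simp: pvars_def)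
qed

subsection \<open>Nonzero admissible evaluations of \<open>f\<^sub>A\<close>\<close>

lemma card_alt_block: "card (alt_block b) = (\<Sum>i<q. n i ^ 2)"
proof -
  have "alt_block b = (\<lambda>(i, t). fvar b i t 1) ` (SIGMA i:{..<q}. {..<n i ^ 2})"
    unfolding alt_block_def by force
  moreover have "inj_on (\<lambda>(i, t). fvar b i t 1) (SIGMA i:{..<q}. {..<n i ^ 2})"
    by (auto simp: inj_on_def fvar_eq_iff)
  ultimately show ?thesis by (simp add: card_image)
qed

lemma inj_on_alt_block_if_peval_nonzero:
  assumes "peval C \<phi> fA \<noteq> azero" "b < R"
  shows "inj_on \<phi> (alt_block b)"
proof (rule inj_onI, rule ccontr)
  fix a a' assume "a \<in> alt_block b" "a' \<in> alt_block b" "\<phi> a = \<phi> a'" "a \<noteq> a'"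
  then have "peval C \<phi> fA = azero"
    using peval_alternating_eq_azero[OF _ _ fA_finite] fA_alternating[OF assms(2)] by blast
  with assms(1) show False by simp
qed

text \<open>The \<open>R\<close> blocks are disjoint, so if each contained a variable with a radical value, the
  product would have at least \<open>R\<close> radical factors.\<close>

lemma radical_free_block:
  assumes bound: "rad_nil_bound C dC jsC R" and w: "fA w \<noteq> 0"
    and carrier: "set (map \<phi> w) \<subseteq> acarrier C" and nz: "aprod C (map \<phi> w) \<noteq> azero"
  obtains b where "b < R" "\<forall>v\<in>block_vars b. \<phi> v \<notin> jsC ` {..<dC}"
proof (rule ccontr)
  assume "\<not> thesis"
  then have "\<forall>b\<in>{..<R}. \<exists>v. v \<in> block_vars b \<and> \<phi> v \<in> jsC ` {..<dC}" using that by blast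
  then obtain rv where rv: "\<forall>b\<in>{..<R}. rv b \<in> block_vars b \<and> \<phi> (rv b) \<in> jsC ` {..<dC}"
    by metis
  have inj: "inj_on rv {..<R}" using rv block_vars_block by (metis inj_onI)
  have w: "distinct w" "set w = all_vars" using fA_word[OF w] by auto
  have "R = card (rv ` {..<R})" using card_image[OF inj] by simp
  also have "\<dots> \<le> card ({x. \<phi> x \<in> jsC ` {..<dC}} \<inter> set w)"
  proof (rule card_mono)
    show "rv ` {..<R} \<subseteq> {x. \<phi> x \<in> jsC ` {..<dC}} \<inter> set w"
      using rv block_vars_subset_all_vars w by auto
  qed simp
  also have "\<dots> = length (filter (\<lambda>x. x \<in> jsC ` {..<dC}) (map \<phi> w))"
    using distinct_length_filter[OF w(1)] by (simp add: filter_map comp_def Int_commute)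
  finally have "aprod C (map \<phi> w) = azero" using bound carrier unfolding rad_nil_bound_def by blast
  with nz show False by simp
qed

lemma strongly_full_fA:
  assumes bound: "rad_nil_bound A d js R"
  shows "strongly_full A q n e d js fA"
  unfolding strongly_full_def
proof (intro conjI fA_multilinear not_is_identity_fA allI impI)
  fix \<phi> i k l
  assume "admissible q n e d js fA \<phi> \<and> peval A \<phi> fA \<noteq> azero" and ikl: "i < q" "k < n i" "l < n i"
  then have basis: "\<forall>v\<in>all_vars. \<phi> v \<in> basis_set q n e d js" and nz: "peval A \<phi> fA \<noteq> azero"
    using pvars_fA by (simp_all add: admissible_def)
  obtain w where w: "fA w \<noteq> 0" "aprod A (map \<phi> w) \<noteq> azero"
    using peval_nonzero_imp_word[OF nz] by blast
  have "set (map \<phi> w) \<subseteq> acarrier A"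
    using fA_word[OF w(1)] basis basis_set_carrier[OF WM] by auto
  then obtain b where b: "b < R" "\<forall>v\<in>block_vars b. \<phi> v \<notin> js ` {..<d}"
    using radical_free_block[OF bound w(1) _ w(2)] by blast
  have alt_block: "alt_block b \<subseteq> all_vars"
    using alt_block_subset_block_vars block_vars_subset_all_vars[OF b(1)] by blast
  let ?E = "{e i k l | i k l. i < q \<and> k < n i \<and> l < n i}"
  have sub: "\<phi> ` alt_block b \<subseteq> ?E"
  proof
    fix x assume "x \<in> \<phi> ` alt_block b"
    then obtain v where v: "v \<in> alt_block b" "x = \<phi> v" by blast
    then have "\<phi> v \<in> basis_set q n e d js" "\<phi> v \<notin> js ` {..<d}"
      using basis b(2) alt_block alt_block_subset_block_vars by blast+
    then show "x \<in> ?E" using basis_set_not_radical v(2) by blast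
  qed
  have "card (\<phi> ` alt_block b) = (\<Sum>i<q. n i ^ 2)"
    using card_image[OF inj_on_alt_block_if_peval_nonzero[OF nz b(1)]] card_alt_block by simp
  then have "card ?E \<le> card (\<phi> ` alt_block b)" using card_semisimple_basis_le[of e q n] by simp
  then have "\<phi> ` alt_block b = ?E" using card_seteq[OF finite_semisimple_basis sub] by blast
  moreover have "e i k l \<in> ?E" using ikl by (intro CollectI exI[of _ i] exI[of _ k] exI[of _ l]) simp
  ultimately have "e i k l \<in> \<phi> ` alt_block b" by simp
  then obtain v where "v \<in> alt_block b" "\<phi> v = e i k l" by (auto elim: imageE)
  then show "\<exists>x\<in>pvars fA. \<phi> x = e i k l" using alt_block pvars_fA by blast
qed

lemma inj_on_perm_alt_block:
  assumes nz: "peval C \<phi> fA \<noteq> azero" and \<sigma>: "\<sigma> \<in> perms" and b: "b < R"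
  shows "inj_on (\<lambda>(i, t). \<phi> (inv \<sigma> (fvar b i t 1))) (SIGMA i:{..<q}. {..<n i ^ 2})"
proof (rule inj_onI, clarify)
  have inj\<phi>: "inj_on \<phi> (alt_block b)" by (rule inj_on_alt_block_if_peval_nonzero[OF nz b])
  have inj\<sigma>: "inj (inv \<sigma>)" using perms_bij[OF \<sigma>] bij_imp_bij_inv bij_is_inj by blast
  fix i t i' t' assume it: "i < q" "t < n i ^ 2" "i' < q" "t' < n i' ^ 2"
    and eq: "\<phi> (inv \<sigma> (fvar b i t 1)) = \<phi> (inv \<sigma> (fvar b i' t' 1))"
  have "inv \<sigma> (fvar b i t 1) \<in> alt_block b" "inv \<sigma> (fvar b i' t' 1) \<in> alt_block b"
    using perms_inv_alt_block[OF \<sigma> b fvar_in_alt_block] it by auto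
  then have "fvar b i t 1 = fvar b i' t' 1" using inj_onD[OF inj\<phi> eq] inj\<sigma> by (simp add: inj_eq)
  then show "i = i' \<and> t = t'" by (simp add: fvar_eq_iff)
qed

lemma segment_in_one_component:
  assumes B: "is_alg B" "is_WM B qB nB eB dB jsB"
    and \<sigma>: "\<sigma> \<in> perms" and w0: "w0 \<in> psupp f0" and b: "b < R" and i: "i < q"
    and semisimple: "\<forall>v\<in>block_vars b. \<exists>c k l. c < qB \<and> k < nB c \<and> l < nB c \<and> \<phi> v = eB c k l"
    and carrier: "set (map \<phi> (map (inv \<sigma>) (expand w0))) \<subseteq> acarrier B"
    and nz: "aprod B (map \<phi> (map (inv \<sigma>) (expand w0))) \<noteq> azero"
  shows "\<exists>c<qB. \<forall>t<n i ^ 2. \<exists>k<nB c. \<exists>l<nB c. \<phi> (inv \<sigma> (fvar b i t 1)) = eB c k l"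
proof -
  let ?f = "\<lambda>u. map \<phi> (map (inv \<sigma>) u)"
  obtain u1 u2 where u: "w0 = u1 @ z i # u2"
    using f0_word[OF w0] z_pvars[OF i] split_list by metis
  obtain pre post where qs: "qword i = pre @ segment b i @ post" using qword_split[OF b] .
  have word: "?f (expand w0) = ?f (expand u1 @ z i # pre) @ ?f (segment b i) @ ?f (post @ expand u2)"
    using u qs subst_word_z[OF i] by (simp add: expand_def)
  have adjacent: "\<forall>s1 x y s2. ?f (segment b i) = s1 @ x # y # s2 \<longrightarrow> amul B x y \<noteq> azero"
  proof (intro allI impI)
    fix s1 x y s2 assume "?f (segment b i) = s1 @ x # y # s2"
    then have "?f (expand w0) = (?f (expand u1 @ z i # pre) @ s1) @ x # y # (s2 @ ?f (post @ expand u2))"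
      using word by simp
    then show "amul B x y \<noteq> azero" using aprod_nonzero_adjacent[OF B(1)] carrier nz by metis
  qed
  have "fvar b i 0 0 \<in> set (segment b i)"
    unfolding set_segment using WM_pos[OF WM i] by (intro CollectI exI[of _ 0]) simp
  then have ne: "?f (segment b i) \<noteq> []" by auto
  have "set (segment b i) \<subseteq> block_vars b" using i by (auto simp: set_segment block_vars_def)
  then have "\<forall>x\<in>set (?f (segment b i)). \<exists>c k l. c < qB \<and> k < nB c \<and> l < nB c \<and> x = eB c k l"
    using semisimple perms_inv_block_vars[OF \<sigma>] by auto
  then obtain c where c: "c < qB" "\<forall>x\<in>set (?f (segment b i)). \<exists>k<nB c. \<exists>l<nB c. x = eB c k l"
    using WM_chain_same_comp[OF B(2) ne _ adjacent] by blast
  have "\<phi> (inv \<sigma> (fvar b i t 1)) \<in> set (?f (segment b i))" if "t < n i ^ 2" for t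
    using that by (force simp: set_segment)
  then show ?thesis using c by blast
qed

lemma is_identity_fA_if_not_covers:
  assumes B: "is_alg B" "is_WM B qB nB eB dB jsB" and nc: "\<not> covers (pdims qB nB) (pdims q n)"
    and bound: "rad_nil_bound B dB jsB R"
  shows "is_identity B fA"
proof (rule is_identity_if_basis_evaluations_vanish[OF fA_multilinear B(2)], intro allI impI, rule ccontr)
  fix \<phi> assume basis: "\<forall>v\<in>pvars fA. \<phi> v \<in> basis_set qB nB eB dB jsB" and nz: "peval B \<phi> fA \<noteq> azero"
  obtain w where w: "fA w \<noteq> 0" "aprod B (map \<phi> w) \<noteq> azero" using peval_nonzero_imp_word[OF nz] .
  have carrier: "set (map \<phi> w) \<subseteq> acarrier B"
    using fA_word[OF w(1)] basis pvars_fA basis_set_carrier[OF B(2)] by auto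
  obtain b where b: "b < R" "\<forall>v\<in>block_vars b. \<phi> v \<notin> jsB ` {..<dB}"
    using radical_free_block[OF bound w(1) carrier w(2)] .
  obtain \<sigma> w0 where \<sigma>: "\<sigma> \<in> perms" "w0 \<in> psupp f0" "w = map (inv \<sigma>) (expand w0)"
    using fA_supp[OF w(1)] by blast
  have "\<exists>c k l. c < qB \<and> k < nB c \<and> l < nB c \<and> \<phi> v = eB c k l" if "v \<in> block_vars b" for v
  proof -
    have "\<phi> v \<in> basis_set qB nB eB dB jsB" "\<phi> v \<notin> jsB ` {..<dB}"
      using basis b(2) pvars_fA block_vars_subset_all_vars[OF b(1)] that by blast+
    then show ?thesis by (rule basis_set_not_radical)
  qed
  then have "\<forall>i<q. \<exists>c<qB. \<forall>t<n i ^ 2. \<exists>k<nB c. \<exists>l<nB c. \<phi> (inv \<sigma> (fvar b i t 1)) = eB c k l"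
    using segment_in_one_component[OF B \<sigma>(1,2) b(1)] carrier w(2) unfolding \<sigma>(3) by blast
  then obtain c where c: "\<forall>i<q. c i < qB"
      "\<forall>i<q. \<forall>t<n i ^ 2. \<exists>k<nB (c i). \<exists>l<nB (c i). \<phi> (inv \<sigma> (fvar b i t 1)) = eB (c i) k l"
    by metis
  have "inj_on (\<lambda>(i, t). \<phi> (inv \<sigma> (fvar b i t 1))) (SIGMA i:{..<q}. {..<n i ^ 2})"
    by (rule inj_on_perm_alt_block[OF nz \<sigma>(1) b(1)])
  then have "covers (pdims qB nB) (pdims q n)"
    by (rule covers_pdims_if_inj[where eB = eB, OF c(1)]) (use c(2) in simp)
  with nc show False ..
qed

end

lemma weakly_full_witness:
  assumes "is_WM A q n e d js" "weakly_full A q n e d js f0"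
  obtains \<phi>0 z kk ll where "\<forall>v\<in>pvars f0. \<phi>0 v \<in> acarrier A" "peval A \<phi>0 f0 \<noteq> azero"
    "\<forall>i<q. z i \<in> pvars f0 \<and> kk i < n i \<and> ll i < n i \<and> \<phi>0 (z i) = e i (kk i) (ll i)"
proof -
  obtain \<phi>0 where \<phi>0: "admissible q n e d js f0 \<phi>0" "peval A \<phi>0 f0 \<noteq> azero"
      "\<forall>i<q. \<exists>x\<in>pvars f0. \<exists>k<n i. \<exists>l<n i. \<phi>0 x = e i k l"
    using assms(2) unfolding weakly_full_def by blast
  from \<phi>0(3) obtain z kk ll where
    "\<forall>i<q. z i \<in> pvars f0 \<and> kk i < n i \<and> ll i < n i \<and> \<phi>0 (z i) = e i (kk i) (ll i)"
    by metis
  moreover have "\<forall>v\<in>pvars f0. \<phi>0 v \<in> acarrier A"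
    using \<phi>0(1) basis_set_carrier[OF assms(1)] unfolding admissible_def by blast
  ultimately show thesis using that \<phi>0(2) by blast
qed

lemma ex_common_bound:
  assumes "\<forall>x\<in>set xs. \<exists>K::nat. P x K" and mono: "\<And>x K K'. P x K \<Longrightarrow> K \<le> K' \<Longrightarrow> P x K'"
  shows "\<exists>R. \<forall>x\<in>set xs. P x R"
  using assms(1)
proof (induction xs)
  case Nil
  then show ?case by simp
next
  case (Cons x xs)
  then obtain R K where "\<forall>y\<in>set xs. P y R" "P x K" by auto
  then have "\<forall>y\<in>set (x # xs). P y (max R K)" using mono by (metis max.cobounded1 max.cobounded2 set_ConsD)
  then show ?case ..
qed

theorem corollary2p5:
  fixes A :: "('f::field_char_0) alg" and Bs :: "'f alg list" and f0 :: "'f ncpoly"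
    and q d :: nat and n :: "nat \<Rightarrow> nat" and e :: "nat \<Rightarrow> nat \<Rightarrow> nat \<Rightarrow> 'f vec"
    and js :: "nat \<Rightarrow> 'f vec"
  assumes "alg_closed TYPE('f)"
    and "is_alg A" and "is_WM A q n e d js" and "is_full A q n e d js"
    and "\<forall>B\<in>set Bs. is_alg B \<and>
           (\<exists>qB nB eB dB jsB. is_WM B qB nB eB dB jsB \<and> is_full B qB nB eB dB jsB \<and>
              \<not> covers (pdims qB nB) (pdims q n))"
    and "weakly_full A q n e d js f0"
  shows "\<exists>fA. fA \<in> Tideal f0 \<and> strongly_full A q n e d js fA \<and>
           (\<forall>B\<in>set Bs. is_identity B fA) \<and> is_identity (alg_dsum Bs) fA"
proof -
  obtain \<phi>0 z kk ll where witness: "\<forall>v\<in>pvars f0. \<phi>0 v \<in> acarrier A" "peval A \<phi>0 f0 \<noteq> azero"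
      "\<forall>i<q. z i \<in> pvars f0 \<and> kk i < n i \<and> ll i < n i \<and> \<phi>0 (z i) = e i (kk i) (ll i)"
    using weakly_full_witness[OF assms(3,6)] .
  obtain RA where RA: "rad_nil_bound A d js RA" using WM_rad_nil_bound[OF assms(2,3)] ..
  let ?P = "\<lambda>B R. is_alg B \<and> (\<exists>qB nB eB dB jsB. is_WM B qB nB eB dB jsB \<and>
      \<not> covers (pdims qB nB) (pdims q n) \<and> rad_nil_bound B dB jsB R)"
  have "\<forall>B\<in>set Bs. \<exists>R. ?P B R" using assms(5) WM_rad_nil_bound by metis
  then obtain RB where RB: "\<forall>B\<in>set Bs. ?P B RB"
    using ex_common_bound[of Bs ?P] rad_nil_bound_mono by blast
  interpret alternating_construction A q n e d js f0 \<phi>0 z kk ll "max RA RB"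
    using assms(2,3,6) witness by unfold_locales (simp_all add: weakly_full_def)
  have "\<forall>B\<in>set Bs. is_identity B fA"
    using RB is_identity_fA_if_not_covers rad_nil_bound_mono[of _ _ _ RB "max RA RB"] by fastforce
  then show ?thesis
    using fA_in_Tideal strongly_full_fA[OF rad_nil_bound_mono[OF RA]] is_identity_alg_dsum fA_finite
    by auto
qed

end
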